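(* The group $G_{sm}=H_9\times S_{sm}$ has exactly three orbits on the set of semi-magic Sudoku boards.
   Context: A Sudoku board is a $9\times 9$ array with entries from $\{0,\dots,8\}$ such that every row, every column and every one of the nine $3\times 3$ blocks contains each symbol exactly once. A semi-magic Sudoku board is a Sudoku board in which, in every block, each of the three rows and each of the three columns of the block has entry sum $12$. $H_9$ is the group of cell rearrangements (acting on boards by moving entries) generated by permutations of the three bands (horizontal strips of blocks), permutations of the rows within a band, permutations of the three pillars (vertical strips of blocks), permutations of the columns within a pillar, and the transpose. A relabeling is a permutation of the symbols $\{0,\dots,8\}$ applied to every entry; $S_{sm}$ is the group of relabelings that map every semi-magic Sudoku board to a semi-magic Sudoku board (it has order $72$). *)

theory Defs
  imports "HOL-Combinatorics.Permutations"
begin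

text \<open>Cells of a 9x9 board: pairs (row, column) with 0 <= row, column < 9.
  A board is a function from cells to symbols; by convention it is 0 outside the cells.\<close>

definition cells :: "(nat \<times> nat) set" where
  "cells = {0..<9} \<times> {0..<9}"

definition sudoku :: "(nat \<times> nat \<Rightarrow> nat) \<Rightarrow> bool" where
  "sudoku B \<longleftrightarrow>
     (\<forall>c. c \<notin> cells \<longrightarrow> B c = 0) \<and>
     (\<forall>i<9. (\<lambda>j. B (i, j)) ` {0..<9} = {0..<9}) \<and>
     (\<forall>j<9. (\<lambda>i. B (i, j)) ` {0..<9} = {0..<9}) \<and>
     (\<forall>bi<3. \<forall>bj<3. (\<lambda>(r, c). B (3 * bi + r, 3 * bj + c)) ` ({0..<3} \<times> {0..<3}) = {0..<9})"

definition semimagic :: "(nat \<times> nat \<Rightarrow> nat) \<Rightarrow> bool" where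
  "semimagic B \<longleftrightarrow> sudoku B \<and>
     (\<forall>bi<3. \<forall>bj<3. \<forall>r<3. (\<Sum>c<3. B (3 * bi + r, 3 * bj + c)) = 12) \<and>
     (\<forall>bi<3. \<forall>bj<3. \<forall>c<3. (\<Sum>r<3. B (3 * bi + r, 3 * bj + c)) = 12)"

definition band_perm :: "(nat \<Rightarrow> nat) \<Rightarrow> nat \<times> nat \<Rightarrow> nat \<times> nat" where
  "band_perm p = (\<lambda>(i, j). if (i, j) \<in> cells then (3 * p (i div 3) + i mod 3, j) else (i, j))"

definition row_perm :: "nat \<Rightarrow> (nat \<Rightarrow> nat) \<Rightarrow> nat \<times> nat \<Rightarrow> nat \<times> nat" where
  "row_perm b q = (\<lambda>(i, j). if (i, j) \<in> cells \<and> i div 3 = b then (3 * b + q (i mod 3), j) else (i, j))"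

definition pillar_perm :: "(nat \<Rightarrow> nat) \<Rightarrow> nat \<times> nat \<Rightarrow> nat \<times> nat" where
  "pillar_perm p = (\<lambda>(i, j). if (i, j) \<in> cells then (i, 3 * p (j div 3) + j mod 3) else (i, j))"

definition col_perm :: "nat \<Rightarrow> (nat \<Rightarrow> nat) \<Rightarrow> nat \<times> nat \<Rightarrow> nat \<times> nat" where
  "col_perm b q = (\<lambda>(i, j). if (i, j) \<in> cells \<and> j div 3 = b then (i, 3 * b + q (j mod 3)) else (i, j))"

definition transpose_cells :: "nat \<times> nat \<Rightarrow> nat \<times> nat" where
  "transpose_cells = (\<lambda>(i, j). (j, i))"

definition H9_gens :: "(nat \<times> nat \<Rightarrow> nat \<times> nat) set" where
  "H9_gens =
     {band_perm p | p. p permutes {0..<3}} \<union>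
     {row_perm b q | b q. b < 3 \<and> q permutes {0..<3}} \<union>
     {pillar_perm p | p. p permutes {0..<3}} \<union>
     {col_perm b q | b q. b < 3 \<and> q permutes {0..<3}} \<union>
     {transpose_cells}"

text \<open>H_9: the group generated by the generators (all permutations of a finite set,
  so the generated monoid is the generated group).\<close>

inductive_set H9 :: "(nat \<times> nat \<Rightarrow> nat \<times> nat) set" where
  H9_id: "id \<in> H9"
| H9_step: "g \<in> H9_gens \<Longrightarrow> h \<in> H9 \<Longrightarrow> g \<circ> h \<in> H9"

definition move :: "(nat \<times> nat \<Rightarrow> nat \<times> nat) \<Rightarrow> (nat \<times> nat \<Rightarrow> nat) \<Rightarrow> (nat \<times> nat \<Rightarrow> nat)" where
  "move \<sigma> B = (\<lambda>c. if c \<in> cells then B (\<sigma> c) else 0)"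

definition relabel :: "(nat \<Rightarrow> nat) \<Rightarrow> (nat \<times> nat \<Rightarrow> nat) \<Rightarrow> (nat \<times> nat \<Rightarrow> nat)" where
  "relabel \<pi> B = (\<lambda>c. if c \<in> cells then \<pi> (B c) else 0)"

definition S_sm :: "(nat \<Rightarrow> nat) set" where
  "S_sm = {\<pi>. \<pi> permutes {0..<9} \<and> (\<forall>B. semimagic B \<longrightarrow> semimagic (relabel \<pi> B))}"

definition G_sm_orbit :: "(nat \<times> nat \<Rightarrow> nat) \<Rightarrow> (nat \<times> nat \<Rightarrow> nat) set" where
  "G_sm_orbit B = {relabel \<pi> (move \<sigma> B) | \<sigma> \<pi>. \<sigma> \<in> H9 \<and> \<pi> \<in> S_sm}"

end

theory Submission
  imports Defs
begin

text \<open>Read the nine symbols as the points of the affine plane over \<open>\<int>/3\<close>. A block row or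
  column of a semi-magic board is a line, and a counting argument shows that it lies in one of
  two parallel classes; after possibly exchanging the two coordinates, the first coordinate is
  constant along block rows and the second along block columns. Such a board is determined by
  two stacks of \<open>3 \<times> 3\<close> Latin squares. Moves of \<open>H\<^sub>9\<close> turn every band into a linear square
  \<open>r + s \<cdot> p\<close> with slope \<open>s \<in> {1, 2}\<close>, and permuting and rescaling the slopes leaves three
  cases, according to how many of the two slope vectors are constant. This number is the
  number of directions (bands, pillars) in which the symbol sets of the block lines line up,
  an invariant of \<open>G\<^sub>s\<^sub>m\<close>.\<close>

section \<open>Symbols as points of the affine plane over \<open>\<int>/3\<close>\<close>

text \<open>The symbol \<open>v\<close> is the point \<open>(v div 3, v mod 3)\<close>. Three distinct symbols with sum 12 form a
  line; \<open>coord1\<close> and \<open>coord2\<close> are the linear forms constant on the lines parallel to \<open>{0,4,8}\<close>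
  and to \<open>{2,4,6}\<close> respectively, and \<open>symbol\<close> inverts the pair of them.\<close>

definition coord1 :: "nat \<Rightarrow> nat" where
  "coord1 v = (v mod 3 + 2 * (v div 3)) mod 3"

definition coord2 :: "nat \<Rightarrow> nat" where
  "coord2 v = (v div 3 + v mod 3) mod 3"

definition symbol :: "nat \<Rightarrow> nat \<Rightarrow> nat" where
  "symbol a b = 3 * ((b + 2 * ((2 * a + 2 * b) mod 3)) mod 3) + (2 * a + 2 * b) mod 3"

lemma less_3_cases: "(v::nat) < 3 \<Longrightarrow> v = 0 \<or> v = 1 \<or> v = 2"
  by auto

lemma less_9_cases:
  "(v::nat) < 9 \<Longrightarrow> v = 0 \<or> v = 1 \<or> v = 2 \<or> v = 3 \<or> v = 4 \<or> v = 5 \<or> v = 6 \<or> v = 7 \<or> v = 8"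
  by auto

lemma all_less_3: "(\<forall>x<3. P x) \<longleftrightarrow> P 0 \<and> P 1 \<and> P (2::nat)"
  by (auto simp: numeral_3_eq_3 numeral_2_eq_2 less_Suc_eq)

lemma ex_less_3: "(\<exists>x<3. P x) \<longleftrightarrow> P 0 \<or> P 1 \<or> P (2::nat)"
  by (auto simp: numeral_3_eq_3 numeral_2_eq_2 less_Suc_eq)

lemma sum_less_3: "(\<Sum>c<3. f c) = f 0 + f 1 + (f 2 :: nat)" for f :: "nat \<Rightarrow> nat"
  by (simp add: eval_nat_numeral)

lemma symbol_less: "symbol a b < 9"
  unfolding symbol_def by linarith

lemma coord1_less: "coord1 v < 3" and coord2_less: "coord2 v < 3"
  by (auto simp: coord1_def coord2_def)

lemma coord_symbol:
  assumes "a < 3" "b < 3"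
  shows coord1_symbol: "coord1 (symbol a b) = a" and coord2_symbol: "coord2 (symbol a b) = b"
  using less_3_cases[OF assms(1)] less_3_cases[OF assms(2)]
  by (elim disjE; simp add: symbol_def coord1_def coord2_def)+

lemma symbol_coord: "v < 9 \<Longrightarrow> symbol (coord1 v) (coord2 v) = v"
  by (drule less_9_cases) (elim disjE; simp add: symbol_def coord1_def coord2_def)

lemma symbol_inject:
  "\<lbrakk>a < 3; b < 3; a' < 3; b' < 3\<rbrakk> \<Longrightarrow> symbol a b = symbol a' b' \<longleftrightarrow> a = a' \<and> b = b'"
  by (metis coord1_symbol coord2_symbol)

lemma coord_eqI: "\<lbrakk>x < 9; y < 9; coord1 x = coord1 y; coord2 x = coord2 y\<rbrakk> \<Longrightarrow> x = y"
  by (metis symbol_coord)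

definition coord_line :: "nat \<Rightarrow> nat \<Rightarrow> nat \<Rightarrow> bool" where
  "coord_line x y z \<longleftrightarrow>
     (coord1 x = coord1 y \<and> coord1 x = coord1 z) \<or> (coord2 x = coord2 y \<and> coord2 x = coord2 z)"

abbreviation magic_triple :: "nat \<Rightarrow> nat \<Rightarrow> nat \<Rightarrow> bool" where
  "magic_triple x y z \<equiv> x < 9 \<and> y < 9 \<and> z < 9 \<and> distinct [x, y, z] \<and> x + y + z = 12"

text \<open>The other two parallel classes contribute only \<open>{3,4,5}\<close> and \<open>{1,4,7}\<close>, while a magic
  triple avoiding 4 meets both \<open>{3,5}\<close> and \<open>{1,7}\<close>: so two disjoint magic triples are coordinate
  lines.\<close>

lemma magic_triple_cases:
  assumes "magic_triple x y z"
  shows "coord_line x y z \<or> 4 \<in> {x, y, z} \<and> ({3, 5} \<subseteq> {x, y, z} \<or> {1, 7} \<subseteq> {x, y, z})"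
proof -
  have xy: "x < 9" "y < 9" and z: "z = 12 - x - y" using assms by arith+
  from less_9_cases[OF xy(1)] less_9_cases[OF xy(2)] assms show ?thesis
    unfolding z by (elim disjE; simp add: coord_line_def coord1_def coord2_def)
qed

lemma magic_triple_avoiding_4:
  assumes "magic_triple x y z" "4 \<notin> {x, y, z}"
  shows "{3, 5} \<inter> {x, y, z} \<noteq> {} \<and> {1, 7} \<inter> {x, y, z} \<noteq> {}"
proof -
  have xy: "x < 9" "y < 9" and z: "z = 12 - x - y" using assms by arith+
  from less_9_cases[OF xy(1)] less_9_cases[OF xy(2)] assms show ?thesis
    unfolding z by (elim disjE; simp)
qed

lemma magic_triple_coord_line:
  assumes "magic_triple x y z" "magic_triple u v w" "{u, v, w} \<inter> {x, y, z} = {}"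
  shows "coord_line x y z"
  using magic_triple_cases[OF assms(1)] magic_triple_avoiding_4[OF assms(2)] assms(3) by auto

lemma coord1_fibre: "v < 9 \<Longrightarrow> v \<in> [{0, 4, 8}, {1, 5, 6}, {2, 3, 7}] ! coord1 v"
  by (drule less_9_cases) (elim disjE; simp add: coord1_def)

lemma coord2_fibre: "v < 9 \<Longrightarrow> v \<in> [{0, 5, 7}, {1, 3, 8}, {2, 4, 6}] ! coord2 v"
  by (drule less_9_cases) (elim disjE; simp add: coord2_def)

lemma distinct_four_not_subset:
  assumes "distinct [x, y, z, w]" "finite A" "card A \<le> 3"
  shows "\<not> {x, y, z, w} \<subseteq> A"
  using assms card_mono[OF assms(2), of "{x, y, z, w}"] by auto

lemma coord1_no_four:
  assumes "x < 9" "y < 9" "z < 9" "w < 9" "distinct [x, y, z, w]"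
    and "coord1 y = coord1 x" "coord1 z = coord1 x" "coord1 w = coord1 x"
  shows False
proof -
  let ?A = "[{0, 4, 8}, {1, 5, 6}, {2, 3, 7}] ! coord1 x :: nat set"
  have "finite ?A" "card ?A \<le> 3"
    using less_3_cases[OF coord1_less[of x]] by auto
  moreover have "{x, y, z, w} \<subseteq> ?A"
    using coord1_fibre[OF assms(1)] coord1_fibre[OF assms(2)] coord1_fibre[OF assms(3)]
      coord1_fibre[OF assms(4)] assms(6-8) by (simp only: insert_subset) simp
  ultimately show False
    using distinct_four_not_subset[OF assms(5)] by blast
qed

lemma coord2_no_four:
  assumes "x < 9" "y < 9" "z < 9" "w < 9" "distinct [x, y, z, w]"
    and "coord2 y = coord2 x" "coord2 z = coord2 x" "coord2 w = coord2 x"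
  shows False
proof -
  let ?A = "[{0, 5, 7}, {1, 3, 8}, {2, 4, 6}] ! coord2 x :: nat set"
  have "finite ?A" "card ?A \<le> 3"
    using less_3_cases[OF coord2_less[of x]] by auto
  moreover have "{x, y, z, w} \<subseteq> ?A"
    using coord2_fibre[OF assms(1)] coord2_fibre[OF assms(2)] coord2_fibre[OF assms(3)]
      coord2_fibre[OF assms(4)] assms(6-8) by (simp only: insert_subset) simp
  ultimately show False
    using distinct_four_not_subset[OF assms(5)] by blast
qed

lemma coord_lines_meet:
  assumes "x < 9" "y < 9" "z < 9" "distinct [x, y, z]" "coord1 y = coord1 x" "coord1 z = coord1 x"
    and "u < 9" "v < 9" "w < 9" "distinct [u, v, w]" "coord2 v = coord2 u" "coord2 w = coord2 u"
  shows "{x, y, z} \<inter> {u, v, w} \<noteq> {}"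
proof -
  define m where "m = symbol (coord1 x) (coord2 u)"
  have m: "m < 9" "coord1 m = coord1 x" "coord2 m = coord2 u"
    by (simp_all add: m_def symbol_less coord1_symbol coord2_symbol coord1_less coord2_less)
  have "m \<in> {x, y, z}"
  proof (rule ccontr)
    assume "m \<notin> {x, y, z}"
    then show False using coord1_no_four[OF assms(1-3) m(1)] assms(4-6) m(2) by simp
  qed
  moreover have "m \<in> {u, v, w}"
  proof (rule ccontr)
    assume "m \<notin> {u, v, w}"
    then show False using coord2_no_four[OF assms(7-9) m(1)] assms(10-12) m(3) by simp
  qed
  ultimately show ?thesis by blast
qed

lemma cells_iff [simp]: "(i, j) \<in> cells \<longleftrightarrow> i < 9 \<and> j < 9"
  by (simp add: cells_def)

definition symbol_board :: "(nat \<times> nat \<Rightarrow> nat) \<Rightarrow> bool" where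
  "symbol_board B \<longleftrightarrow> (\<forall>c. c \<notin> cells \<longrightarrow> B c = 0) \<and> (\<forall>c. B c < 9)"

lemma symbol_boardD:
  "symbol_board B \<Longrightarrow> B c < 9"
  "symbol_board B \<Longrightarrow> c \<notin> cells \<Longrightarrow> B c = 0"
  unfolding symbol_board_def by blast+

lemma move_id: assumes "symbol_board B" shows "move id B = B"
  using symbol_boardD(2)[OF assms] by (auto simp: move_def)

lemma relabel_id: assumes "symbol_board B" shows "relabel id B = B"
  using symbol_boardD(2)[OF assms] by (auto simp: relabel_def)

lemma move_symbol_board: assumes "symbol_board B" shows "symbol_board (move \<sigma> B)"
  using symbol_boardD(1)[OF assms] unfolding symbol_board_def move_def by auto

lemma move_move: "\<forall>c\<in>cells. h c \<in> cells \<Longrightarrow> move h (move g B) = move (g \<circ> h) B"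
  by (auto simp: move_def fun_eq_iff)

lemma relabel_relabel: "relabel p (relabel q B) = relabel (p \<circ> q) B"
  by (auto simp: relabel_def fun_eq_iff)

lemma move_relabel: "\<forall>c\<in>cells. g c \<in> cells \<Longrightarrow> move g (relabel p B) = relabel p (move g B)"
  by (auto simp: move_def relabel_def fun_eq_iff)

lemma permutes_3_less: "p permutes {0..<3} \<Longrightarrow> x < 3 \<Longrightarrow> p x < (3::nat)"
  using permutes_in_image[of p "{0..<3}" x] by simp

lemma three_mult_add_div: "r < 3 \<Longrightarrow> (3 * k + r) div 3 = (k::nat)"
  and three_mult_add_mod: "r < 3 \<Longrightarrow> (3 * k + r) mod 3 = (r::nat)"
  by simp_all

lemma three_mult_add_less_9: "k < 3 \<Longrightarrow> r < 3 \<Longrightarrow> 3 * k + r < (9::nat)"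
  by simp

lemmas three_mult_add_simps = three_mult_add_div three_mult_add_mod three_mult_add_less_9

lemma H9_gens_cells: "g \<in> H9_gens \<Longrightarrow> c \<in> cells \<Longrightarrow> g c \<in> cells"
  by (cases c) (auto simp: H9_gens_def band_perm_def row_perm_def pillar_perm_def col_perm_def
      transpose_cells_def permutes_3_less three_mult_add_less_9)

lemma H9_cells: "\<sigma> \<in> H9 \<Longrightarrow> c \<in> cells \<Longrightarrow> \<sigma> c \<in> cells"
  by (induction arbitrary: c rule: H9.induct) (auto simp: H9_gens_cells)

lemma H9_comp: "\<sigma> \<in> H9 \<Longrightarrow> \<tau> \<in> H9 \<Longrightarrow> \<sigma> \<circ> \<tau> \<in> H9"
  by (induction rule: H9.induct) (auto simp: comp_assoc intro: H9.intros)

lemma H9_gens_in_H9: "g \<in> H9_gens \<Longrightarrow> g \<in> H9"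
  using H9_step[OF _ H9_id] by simp

lemma band_perm_inverse:
  assumes p: "p permutes {0..<3}" and c: "c \<in> cells"
  shows "band_perm p (band_perm (inv p) c) = c"
proof -
  obtain i j where ij: "c = (i, j)" "i < 9" "j < 9" using c by (cases c) auto
  then have "inv p (i div 3) < 3" using permutes_3_less[OF permutes_inv[OF p]] by simp
  with ij show ?thesis by (simp add: band_perm_def three_mult_add_simps permutes_inverses(1)[OF p])
qed

lemma row_perm_inverse:
  assumes "q permutes {0..<3}" "c \<in> cells"
  shows "row_perm b q (row_perm b (inv q) c) = c"
  using assms permutes_3_less[OF permutes_inv[OF assms(1)], of "fst c mod 3"]
  by (cases c) (auto simp: row_perm_def three_mult_add_simps permutes_inverses(1))

lemma pillar_perm_inverse:
  assumes p: "p permutes {0..<3}" and c: "c \<in> cells"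
  shows "pillar_perm p (pillar_perm (inv p) c) = c"
proof -
  obtain i j where ij: "c = (i, j)" "i < 9" "j < 9" using c by (cases c) auto
  then have "inv p (j div 3) < 3" using permutes_3_less[OF permutes_inv[OF p]] by simp
  with ij show ?thesis
    by (simp add: pillar_perm_def three_mult_add_simps permutes_inverses(1)[OF p])
qed

lemma col_perm_inverse:
  assumes "q permutes {0..<3}" "c \<in> cells"
  shows "col_perm b q (col_perm b (inv q) c) = c"
  using assms permutes_3_less[OF permutes_inv[OF assms(1)], of "snd c mod 3"]
  by (cases c) (auto simp: col_perm_def three_mult_add_simps permutes_inverses(1))

lemma H9_gens_inverse:
  assumes "g \<in> H9_gens"
  shows "\<exists>g'\<in>H9_gens. \<forall>c\<in>cells. g (g' c) = c"
proof -
  from assms consider (band) p where "g = band_perm p" "p permutes {0..<3}"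
    | (row) b q where "g = row_perm b q" "b < 3" "q permutes {0..<3}"
    | (pillar) p where "g = pillar_perm p" "p permutes {0..<3}"
    | (col) b q where "g = col_perm b q" "b < 3" "q permutes {0..<3}"
    | (transpose) "g = transpose_cells"
    unfolding H9_gens_def by blast
  then show ?thesis
  proof cases
    case band
    then have "band_perm (inv p) \<in> H9_gens" unfolding H9_gens_def by (blast intro: permutes_inv)
    with band show ?thesis using band_perm_inverse by blast
  next
    case row
    then have "row_perm b (inv q) \<in> H9_gens" unfolding H9_gens_def by (blast intro: permutes_inv)
    with row show ?thesis using row_perm_inverse by blast
  next
    case pillar
    then have "pillar_perm (inv p) \<in> H9_gens" unfolding H9_gens_def by (blast intro: permutes_inv)
    with pillar show ?thesis using pillar_perm_inverse by blast
  next
    case col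
    then have "col_perm b (inv q) \<in> H9_gens" unfolding H9_gens_def by (blast intro: permutes_inv)
    with col show ?thesis using col_perm_inverse by blast
  next
    case transpose
    then show ?thesis by (auto simp: H9_gens_def transpose_cells_def)
  qed
qed

lemma H9_inverse: "\<sigma> \<in> H9 \<Longrightarrow> \<exists>\<sigma>'\<in>H9. \<forall>c\<in>cells. \<sigma> (\<sigma>' c) = c"
proof (induction rule: H9.induct)
  case H9_id
  show ?case using H9.H9_id by (intro bexI[of _ id]) auto
next
  case (H9_step g h)
  obtain h' where h': "h' \<in> H9" "\<forall>c\<in>cells. h (h' c) = c"
    using H9_step.IH by blast
  obtain g' where g': "g' \<in> H9_gens" "\<forall>c\<in>cells. g (g' c) = c"
    using H9_gens_inverse[OF H9_step.hyps(1)] by blast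
  have "h' \<circ> g' \<in> H9"
    using H9_comp[OF h'(1) H9_gens_in_H9[OF g'(1)]] .
  moreover have "\<forall>c\<in>cells. (g \<circ> h) ((h' \<circ> g') c) = c"
    using h' g' H9_gens_cells[OF g'(1)] by auto
  ultimately show ?case by blast
qed

lemma id_in_S_sm: "id \<in> S_sm"
  unfolding S_sm_def
proof (intro CollectI conjI allI impI)
  fix B assume "semimagic B"
  then have "relabel id B = B"
    by (auto simp: relabel_def fun_eq_iff semimagic_def sudoku_def)
  with \<open>semimagic B\<close> show "semimagic (relabel id B)" by simp
qed simp

lemma S_sm_comp: "p \<in> S_sm \<Longrightarrow> q \<in> S_sm \<Longrightarrow> p \<circ> q \<in> S_sm"
  unfolding S_sm_def by (auto simp: permutes_compose relabel_relabel[symmetric])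

lemma G_sm_orbit_relabel_move:
  assumes B: "symbol_board B" and \<sigma>0: "\<sigma>0 \<in> H9" and \<pi>0: "\<pi>0 \<in> S_sm" "\<pi>0' \<in> S_sm"
    and inv: "\<And>v. v < 9 \<Longrightarrow> \<pi>0' (\<pi>0 v) = v"
  shows "G_sm_orbit (relabel \<pi>0 (move \<sigma>0 B)) = G_sm_orbit B"
proof
  show "G_sm_orbit (relabel \<pi>0 (move \<sigma>0 B)) \<subseteq> G_sm_orbit B"
  proof
    fix X assume "X \<in> G_sm_orbit (relabel \<pi>0 (move \<sigma>0 B))"
    then obtain \<sigma> \<pi> where X: "X = relabel \<pi> (move \<sigma> (relabel \<pi>0 (move \<sigma>0 B)))" "\<sigma> \<in> H9" "\<pi> \<in> S_sm"
      unfolding G_sm_orbit_def by blast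
    have "\<forall>c\<in>cells. \<sigma> c \<in> cells" using H9_cells[OF X(2)] by blast
    then have "X = relabel (\<pi> \<circ> \<pi>0) (move (\<sigma>0 \<circ> \<sigma>) B)"
      using X(1) by (simp add: move_relabel relabel_relabel move_move)
    then show "X \<in> G_sm_orbit B" unfolding G_sm_orbit_def
      using H9_comp[OF \<sigma>0 X(2)] S_sm_comp[OF X(3) \<pi>0(1)] by blast
  qed
  show "G_sm_orbit B \<subseteq> G_sm_orbit (relabel \<pi>0 (move \<sigma>0 B))"
  proof
    fix X assume "X \<in> G_sm_orbit B"
    then obtain \<sigma> \<pi> where X: "X = relabel \<pi> (move \<sigma> B)" "\<sigma> \<in> H9" "\<pi> \<in> S_sm"
      unfolding G_sm_orbit_def by blast
    obtain \<sigma>' where \<sigma>': "\<sigma>' \<in> H9" "\<forall>c\<in>cells. \<sigma>0 (\<sigma>' c) = c"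
      using H9_inverse[OF \<sigma>0] by blast
    have "X = relabel (\<pi> \<circ> \<pi>0') (move (\<sigma>' \<circ> \<sigma>) (relabel \<pi>0 (move \<sigma>0 B)))"
      using X(1) \<sigma>' H9_cells[OF X(2)] H9_cells[OF \<sigma>'(1)] inv symbol_boardD(1)[OF B]
      by (auto simp: relabel_def move_def fun_eq_iff)
    then show "X \<in> G_sm_orbit (relabel \<pi>0 (move \<sigma>0 B))" unfolding G_sm_orbit_def
      using H9_comp[OF \<sigma>'(1) X(2)] S_sm_comp[OF X(3) \<pi>0(2)] by blast
  qed
qed

lemma G_sm_orbit_move: "symbol_board B \<Longrightarrow> \<sigma> \<in> H9 \<Longrightarrow> G_sm_orbit (move \<sigma> B) = G_sm_orbit B"
  using G_sm_orbit_relabel_move[OF _ _ id_in_S_sm id_in_S_sm]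
  by (simp add: relabel_id move_symbol_board)

lemma G_sm_orbit_relabel:
  "symbol_board B \<Longrightarrow> \<pi> \<in> S_sm \<Longrightarrow> (\<And>v. v < 9 \<Longrightarrow> \<pi> (\<pi> v) = v) \<Longrightarrow>
    G_sm_orbit (relabel \<pi> B) = G_sm_orbit B"
  using G_sm_orbit_relabel_move[OF _ H9_id] by (simp add: move_id)

lemma in_G_sm_orbit_self: "symbol_board B \<Longrightarrow> B \<in> G_sm_orbit B"
  unfolding G_sm_orbit_def using H9_id id_in_S_sm by (force simp: relabel_id move_id)

section \<open>Sudoku boards in block coordinates\<close>

text \<open>Keeping block coordinates folded stops the simplifier from rewriting \<open>3 * p + 0\<close>, so the
  injectivity rules below apply by \<open>simp\<close>.\<close>

definition entry :: "(nat \<times> nat \<Rightarrow> nat) \<Rightarrow> nat \<Rightarrow> nat \<Rightarrow> nat \<Rightarrow> nat \<Rightarrow> nat" where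
  "entry B b p r c = B (3 * b + r, 3 * p + c)"

lemma entry_cell: "i < 9 \<Longrightarrow> j < 9 \<Longrightarrow> B (i, j) = entry B (i div 3) (j div 3) (i mod 3) (j mod 3)"
  by (simp add: entry_def)

lemma sudoku_outside: "sudoku B \<Longrightarrow> c \<notin> cells \<Longrightarrow> B c = 0"
  unfolding sudoku_def by (cases c) (simp del: cells_iff)

lemma sudoku_row: "sudoku B \<Longrightarrow> i < 9 \<Longrightarrow> (\<lambda>j. B (i, j)) ` {0..<9} = {0..<9}"
  unfolding sudoku_def by (simp del: cells_iff)

lemma sudoku_col: "sudoku B \<Longrightarrow> j < 9 \<Longrightarrow> (\<lambda>i. B (i, j)) ` {0..<9} = {0..<9}"
  unfolding sudoku_def by (simp del: cells_iff)

lemma sudoku_block: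
  "sudoku B \<Longrightarrow> b < 3 \<Longrightarrow> p < 3 \<Longrightarrow> (\<lambda>(r, c). entry B b p r c) ` ({0..<3} \<times> {0..<3}) = {0..<9}"
  unfolding sudoku_def entry_def by (simp del: cells_iff)

lemma sudoku_less_9:
  assumes "sudoku B"
  shows "B c < 9"
proof (cases "c \<in> cells")
  case True
  then obtain i j where "c = (i, j)" "i < 9" "j < 9" by (cases c) auto
  then show ?thesis using sudoku_row[OF assms, of i] by auto
next
  case False
  then show ?thesis using sudoku_outside[OF assms] by simp
qed

lemma sudoku_symbol_board: "sudoku B \<Longrightarrow> symbol_board B"
  by (simp add: symbol_board_def sudoku_outside sudoku_less_9)

lemma semimagic_sudoku: "semimagic B \<Longrightarrow> sudoku B"
  by (simp add: semimagic_def)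

lemma three_mult_add_inject:
  "c < 3 \<Longrightarrow> c' < 3 \<Longrightarrow> 3 * p + c = 3 * p' + c' \<longleftrightarrow> p = p' \<and> c = (c'::nat)"
  by (metis three_mult_add_div three_mult_add_mod)

lemma surj_imp_inj_on_9:
  "f ` {0..<9} = {0..<9::nat} \<Longrightarrow> x < 9 \<Longrightarrow> y < 9 \<Longrightarrow> f x = f y \<longleftrightarrow> x = (y::nat)"
  using eq_card_imp_inj_on[of "{0..<9::nat}" f] by (auto dest: inj_onD)

lemma entry_row_inject:
  assumes "sudoku B" "b < 3" "r < 3" "p < 3" "c < 3" "p' < 3" "c' < 3"
  shows "entry B b p r c = entry B b p' r c' \<longleftrightarrow> p = p' \<and> c = c'"
  using surj_imp_inj_on_9[OF sudoku_row[OF assms(1), of "3 * b + r"], of "3 * p + c" "3 * p' + c'"]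
    assms
  by (simp add: entry_def three_mult_add_inject)

lemma entry_col_inject:
  assumes "sudoku B" "p < 3" "c < 3" "b < 3" "r < 3" "b' < 3" "r' < 3"
  shows "entry B b p r c = entry B b' p r' c \<longleftrightarrow> b = b' \<and> r = r'"
  using surj_imp_inj_on_9[OF sudoku_col[OF assms(1), of "3 * p + c"], of "3 * b + r" "3 * b' + r'"]
    assms
  by (simp add: entry_def three_mult_add_inject)

lemma entry_block_inject:
  assumes "sudoku B" "b < 3" "p < 3" "r < 3" "c < 3" "r' < 3" "c' < 3"
  shows "entry B b p r c = entry B b p r' c' \<longleftrightarrow> r = r' \<and> c = c'"
proof -
  have "inj_on (\<lambda>(r, c). entry B b p r c) ({0..<3} \<times> {0..<3})"
    using sudoku_block[OF assms(1-3)] by (intro eq_card_imp_inj_on) auto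
  from inj_on_eq_iff[OF this, of "(r, c)" "(r', c')"] assms show ?thesis by simp
qed

lemma entry_less_9: "sudoku B \<Longrightarrow> entry B b p r c < 9"
  by (simp add: entry_def sudoku_less_9)

lemma semimagic_row_sum:
  "semimagic B \<Longrightarrow> b < 3 \<Longrightarrow> p < 3 \<Longrightarrow> r < 3 \<Longrightarrow> entry B b p r 0 + entry B b p r 1 + entry B b p r 2 = 12"
  unfolding semimagic_def entry_def by (simp add: sum_less_3)

lemma semimagic_col_sum:
  "semimagic B \<Longrightarrow> b < 3 \<Longrightarrow> p < 3 \<Longrightarrow> c < 3 \<Longrightarrow> entry B b p 0 c + entry B b p 1 c + entry B b p 2 c = 12"
  unfolding semimagic_def entry_def by (simp add: sum_less_3)

lemma sudokuI:
  assumes "\<And>c. c \<notin> cells \<Longrightarrow> B c = 0"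
    and "\<And>i. i < 9 \<Longrightarrow> (\<lambda>j. B (i, j)) ` {0..<9} = {0..<9}"
    and "\<And>j. j < 9 \<Longrightarrow> (\<lambda>i. B (i, j)) ` {0..<9} = {0..<9}"
    and "\<And>b p. b < 3 \<Longrightarrow> p < 3 \<Longrightarrow> (\<lambda>(r, c). entry B b p r c) ` ({0..<3} \<times> {0..<3}) = {0..<9}"
  shows "sudoku B"
  unfolding sudoku_def
proof (intro conjI allI impI)
  show "B c = 0" if "c \<notin> cells" for c using assms(1) that .
  show "(\<lambda>j. B (i, j)) ` {0..<9} = {0..<9}" if "i < 9" for i using assms(2) that .
  show "(\<lambda>i. B (i, j)) ` {0..<9} = {0..<9}" if "j < 9" for j using assms(3) that .
  show "(\<lambda>(r, c). B (3 * bi + r, 3 * bj + c)) ` ({0..<3} \<times> {0..<3}) = {0..<9}"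
    if "bi < 3" "bj < 3" for bi bj
    using assms(4)[OF that] unfolding entry_def .
qed

lemma semimagicI:
  assumes "sudoku B"
    and "\<And>b p r. b < 3 \<Longrightarrow> p < 3 \<Longrightarrow> r < 3 \<Longrightarrow> entry B b p r 0 + entry B b p r 1 + entry B b p r 2 = 12"
    and "\<And>b p c. b < 3 \<Longrightarrow> p < 3 \<Longrightarrow> c < 3 \<Longrightarrow> entry B b p 0 c + entry B b p 1 c + entry B b p 2 c = 12"
  shows "semimagic B"
  using assms unfolding semimagic_def entry_def by (simp add: sum_less_3)

lemma entry_relabel: "r < 3 \<Longrightarrow> c < 3 \<Longrightarrow> b < 3 \<Longrightarrow> p < 3 \<Longrightarrow> entry (relabel \<pi> B) b p r c
  = \<pi> (entry B b p r c)"
  by (simp add: entry_def relabel_def)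

lemma relabel_sudoku:
  assumes \<pi>: "\<pi> permutes {0..<9}" and s: "sudoku B"
  shows "sudoku (relabel \<pi> B)"
proof (rule sudokuI)
  have img: "\<pi> ` {0..<9} = {0..<9}" using permutes_image[OF \<pi>] .
  show "relabel \<pi> B c = 0" if "c \<notin> cells" for c using that by (simp add: relabel_def)
  show "(\<lambda>j. relabel \<pi> B (i, j)) ` {0..<9} = {0..<9}" if "i < 9" for i
  proof -
    have "(\<lambda>j. relabel \<pi> B (i, j)) ` {0..<9} = \<pi> ` ((\<lambda>j. B (i, j)) ` {0..<9})"
      using that by (auto simp: relabel_def image_image)
    then show ?thesis using sudoku_row[OF s that] img by simp
  qed
  show "(\<lambda>i. relabel \<pi> B (i, j)) ` {0..<9} = {0..<9}" if "j < 9" for j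
  proof -
    have "(\<lambda>i. relabel \<pi> B (i, j)) ` {0..<9} = \<pi> ` ((\<lambda>i. B (i, j)) ` {0..<9})"
      using that by (auto simp: relabel_def image_image)
    then show ?thesis using sudoku_col[OF s that] img by simp
  qed
  show "(\<lambda>(r, c). entry (relabel \<pi> B) b p r c) ` ({0..<3} \<times> {0..<3}) = {0..<9}"
    if "b < 3" "p < 3" for b p
  proof -
    have "(\<lambda>(r, c). entry (relabel \<pi> B) b p r c) ` ({0..<3} \<times> {0..<3})
        = \<pi> ` ((\<lambda>(r, c). entry B b p r c) ` ({0..<3} \<times> {0..<3}))"
      using that by (force simp: entry_relabel image_image)
    then show ?thesis using sudoku_block[OF s that] img by simp
  qed
qed

section \<open>Local structure of semi-magic boards\<close>

lemma other_index: obtains k' :: nat where "k' < 3" "k' \<noteq> k"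
  using that[of "if k = 0 then 1 else 0"] by auto

lemma semimagic_minirow_coord_line:
  assumes sm: "semimagic B" and bpr: "b < 3" "p < 3" "r < 3"
  shows "coord_line (entry B b p r 0) (entry B b p r 1) (entry B b p r 2)"
proof -
  have s: "sudoku B" using sm by (rule semimagic_sudoku)
  obtain r' where r': "r' < 3" "r' \<noteq> r" using other_index .
  note inj = entry_block_inject[OF s bpr(1,2)]
  have magic: "magic_triple (entry B b p k 0) (entry B b p k 1) (entry B b p k 2)" if "k < 3" for k
    using that semimagic_row_sum[OF sm bpr(1,2) that] by (simp add: entry_less_9[OF s] inj)
  have "{entry B b p r' 0, entry B b p r' 1, entry B b p r' 2}
      \<inter> {entry B b p r 0, entry B b p r 1, entry B b p r 2} = {}"
    using bpr r' by (simp add: inj)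
  then show ?thesis by (rule magic_triple_coord_line[OF magic[OF bpr(3)] magic[OF r'(1)]])
qed

lemma semimagic_minicol_coord_line:
  assumes sm: "semimagic B" and bpc: "b < 3" "p < 3" "c < 3"
  shows "coord_line (entry B b p 0 c) (entry B b p 1 c) (entry B b p 2 c)"
proof -
  have s: "sudoku B" using sm by (rule semimagic_sudoku)
  obtain c' where c': "c' < 3" "c' \<noteq> c" using other_index .
  note inj = entry_block_inject[OF s bpc(1,2)]
  have magic: "magic_triple (entry B b p 0 k) (entry B b p 1 k) (entry B b p 2 k)" if "k < 3" for k
    using that semimagic_col_sum[OF sm bpc(1,2) that] by (simp add: entry_less_9[OF s] inj)
  have "{entry B b p 0 c', entry B b p 1 c', entry B b p 2 c'}
      \<inter> {entry B b p 0 c, entry B b p 1 c, entry B b p 2 c} = {}"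
    using bpc c' by (simp add: inj)
  then show ?thesis by (rule magic_triple_coord_line[OF magic[OF bpc(3)] magic[OF c'(1)]])
qed

lemma coord1_line_sum:
  assumes "x < 9" "y < 9" "z < 9" "distinct [x, y, z]" "coord1 y = coord1 x" "coord1 z = coord1 x"
  shows "x + y + z = 12"
proof -
  have "{x, y, z} \<subseteq> [{0, 4, 8}, {1, 5, 6}, {2, 3, 7}] ! coord1 x"
    using coord1_fibre[OF assms(1)] coord1_fibre[OF assms(2)] coord1_fibre[OF assms(3)] assms(5,6)
    by (simp only: insert_subset) simp
  then show ?thesis using less_3_cases[OF coord1_less[of x]] assms(4) by (elim disjE) auto
qed

lemma coord2_line_sum:
  assumes "x < 9" "y < 9" "z < 9" "distinct [x, y, z]" "coord2 y = coord2 x" "coord2 z = coord2 x"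
  shows "x + y + z = 12"
proof -
  have "{x, y, z} \<subseteq> [{0, 5, 7}, {1, 3, 8}, {2, 4, 6}] ! coord2 x"
    using coord2_fibre[OF assms(1)] coord2_fibre[OF assms(2)] coord2_fibre[OF assms(3)] assms(5,6)
    by (simp only: insert_subset) simp
  then show ?thesis using less_3_cases[OF coord2_less[of x]] assms(4) by (elim disjE) auto
qed

lemma coord_line_sum:
  assumes "x < 9" "y < 9" "z < 9" "distinct [x, y, z]" "coord_line x y z"
  shows "x + y + z = 12"
  using assms(5) coord1_line_sum[OF assms(1-4)] coord2_line_sum[OF assms(1-4)]
  unfolding coord_line_def by auto

text \<open>Block lines of a semi-magic board are coordinate lines, and all coordinate lines are magic.\<close>

lemma S_sm_if_coord_lines:
  assumes \<pi>: "\<pi> permutes {0..<9}"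
    and lines: "\<And>x y z. magic_triple x y z \<Longrightarrow> coord_line x y z \<Longrightarrow> coord_line (\<pi> x) (\<pi> y) (\<pi> z)"
  shows "\<pi> \<in> S_sm"
proof -
  have sum: "\<pi> x + \<pi> y + \<pi> z = 12" if "magic_triple x y z" "coord_line x y z" for x y z
  proof (rule coord_line_sum)
    show "\<pi> x < 9" "\<pi> y < 9" "\<pi> z < 9"
      using that(1) permutes_in_image[OF \<pi>] by auto
    show "distinct [\<pi> x, \<pi> y, \<pi> z]"
      using that(1) inj_on_eq_iff[OF permutes_inj_on[OF \<pi>]] by auto
    show "coord_line (\<pi> x) (\<pi> y) (\<pi> z)" using lines[OF that] .
  qed
  have "semimagic (relabel \<pi> B)" if sm: "semimagic B" for B
  proof (rule semimagicI)
    have s: "sudoku B" using sm by (rule semimagic_sudoku)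
    note inj = entry_block_inject[OF s]
    show "sudoku (relabel \<pi> B)" by (rule relabel_sudoku[OF \<pi> s])
    show "entry (relabel \<pi> B) b p r 0 + entry (relabel \<pi> B) b p r 1 + entry (relabel \<pi> B) b p r 2
      = 12"
      if "b < 3" "p < 3" "r < 3" for b p r
      using sum semimagic_minirow_coord_line[OF sm that] semimagic_row_sum[OF sm that] that
      by (simp add: entry_relabel entry_less_9[OF s] inj)
    show "entry (relabel \<pi> B) b p 0 c + entry (relabel \<pi> B) b p 1 c + entry (relabel \<pi> B) b p 2 c
      = 12"
      if "b < 3" "p < 3" "c < 3" for b p c
      using sum semimagic_minicol_coord_line[OF sm that] semimagic_col_sum[OF sm that] that
      by (simp add: entry_relabel entry_less_9[OF s] inj)
  qed
  with \<pi> show ?thesis unfolding S_sm_def by blast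
qed

definition coord_swap :: "nat \<Rightarrow> nat" where
  "coord_swap v = (if v < 9 then symbol (coord2 v) (coord1 v) else v)"

lemma coord_swap_coords:
  "v < 9 \<Longrightarrow> coord1 (coord_swap v) = coord2 v"
  "v < 9 \<Longrightarrow> coord2 (coord_swap v) = coord1 v"
  by (simp_all add: coord_swap_def coord1_symbol coord2_symbol coord1_less coord2_less)

lemma coord_swap_less: "v < 9 \<Longrightarrow> coord_swap v < 9"
  by (simp add: coord_swap_def symbol_less)

lemma coord_swap_symbol: "a < 3 \<Longrightarrow> b < 3 \<Longrightarrow> coord_swap (symbol a b) = symbol b a"
  by (simp add: coord_swap_def symbol_less coord1_symbol coord2_symbol)

lemma coord_swap_involution: "v < 9 \<Longrightarrow> coord_swap (coord_swap v) = v"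
  by (rule coord_eqI) (simp_all add: coord_swap_less coord_swap_coords)

lemma coord_swap_permutes: "coord_swap permutes {0..<9}"
proof (rule bij_imp_permutes)
  show "bij_betw coord_swap {0..<9} {0..<9}"
    by (rule bij_betw_byWitness[of _ coord_swap]) (auto simp: coord_swap_involution coord_swap_less)
qed (simp add: coord_swap_def)

lemma coord_swap_in_S_sm: "coord_swap \<in> S_sm"
  by (rule S_sm_if_coord_lines[OF coord_swap_permutes]) (auto
    simp: coord_line_def coord_swap_coords)

section \<open>Global structure of semi-magic boards\<close>

lemma coord_no_four:
  assumes "f = coord1 \<or> f = coord2" "x < 9" "y < 9" "z < 9" "w < 9" "distinct [x, y, z, w]"
    and "f y = f x" "f z = f x" "f w = f x"
  shows False
  using assms(1)
proof
  assume "f = coord1"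
  then show False using coord1_no_four[OF assms(2-6)] assms(7-9) by simp
next
  assume "f = coord2"
  then show False using coord2_no_four[OF assms(2-6)] assms(7-9) by simp
qed

definition minirow_const :: "(nat \<Rightarrow> nat) \<Rightarrow> (nat \<times> nat \<Rightarrow> nat) \<Rightarrow> nat \<Rightarrow> nat \<Rightarrow> nat \<Rightarrow> bool" where
  "minirow_const f B b p r \<longleftrightarrow> (\<forall>c<3. f (entry B b p r c) = f (entry B b p r 0))"

definition minicol_const :: "(nat \<Rightarrow> nat) \<Rightarrow> (nat \<times> nat \<Rightarrow> nat) \<Rightarrow> nat \<Rightarrow> nat \<Rightarrow> nat \<Rightarrow> bool" where
  "minicol_const f B b p c \<longleftrightarrow> (\<forall>r<3. f (entry B b p r c) = f (entry B b p 0 c))"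

lemma semimagic_minirow_const:
  "semimagic B \<Longrightarrow> b < 3 \<Longrightarrow> p < 3 \<Longrightarrow> r < 3 \<Longrightarrow>
    minirow_const coord1 B b p r \<or> minirow_const coord2 B b p r"
  using semimagic_minirow_coord_line[of B b p r]
  unfolding coord_line_def minirow_const_def all_less_3 by auto

lemma semimagic_minicol_const:
  "semimagic B \<Longrightarrow> b < 3 \<Longrightarrow> p < 3 \<Longrightarrow> c < 3 \<Longrightarrow>
    minicol_const coord1 B b p c \<or> minicol_const coord2 B b p c"
  using semimagic_minicol_coord_line[of B b p c]
  unfolding coord_line_def minicol_const_def all_less_3 by auto

lemma not_minirow_const_and_minicol_const:
  assumes sm: "semimagic B" and f: "f = coord1 \<or> f = coord2"
    and bprc: "b < 3" "p < 3" "r < 3" "c < 3"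
  shows "\<not> (minirow_const f B b p r \<and> minicol_const f B b p c)"
proof
  assume const: "minirow_const f B b p r \<and> minicol_const f B b p c"
  have s: "sudoku B" using sm by (rule semimagic_sudoku)
  obtain r' where r': "r' < 3" "r' \<noteq> r" using other_index .
  let ?x = "entry B b p r 0" and ?y = "entry B b p r 1" and ?z = "entry B b p r 2"
    and ?w = "entry B b p r' c"
  have less: "?x < 9" "?y < 9" "?z < 9" "?w < 9" using entry_less_9[OF s] by blast+
  have dist: "distinct [?x, ?y, ?z, ?w]" using bprc r' by (simp add: entry_block_inject[OF s])
  from const have row: "\<forall>k<3. f (entry B b p r k) = f ?x"
    unfolding minirow_const_def by (rule conjunct1)
  from const have col: "\<forall>k<3. f (entry B b p k c) = f (entry B b p 0 c)"
    unfolding minicol_const_def by (rule conjunct2)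
  have "f ?y = f ?x" "f ?z = f ?x" using row[rule_format, of 1] row[rule_format, of 2] by simp_all
  moreover have "f ?w = f ?x"
    using col[rule_format, OF r'(1)] col[rule_format, OF bprc(3)] row[rule_format, OF bprc(4)]
      by simp
  ultimately show False using coord_no_four[OF f less dist] by blast
qed

lemma not_minirow_const_both_coords:
  assumes sm: "semimagic B" and bppr: "b < 3" "p < 3" "p' < 3" "r < 3"
  shows "\<not> (minirow_const coord1 B b p r \<and> minirow_const coord2 B b p' r)"
proof
  assume const: "minirow_const coord1 B b p r \<and> minirow_const coord2 B b p' r"
  have s: "sudoku B" using sm by (rule semimagic_sudoku)
  note inj = entry_row_inject[OF s bppr(1,4)] and less = entry_less_9[OF s]
  from const have c1: "\<forall>k<3. coord1 (entry B b p r k) = coord1 (entry B b p r 0)"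
    unfolding minirow_const_def by (rule conjunct1)
  from const have c2: "\<forall>k<3. coord2 (entry B b p' r k) = coord2 (entry B b p' r 0)"
    unfolding minirow_const_def by (rule conjunct2)
  show False
  proof (cases "p = p'")
    case True
    have "entry B b p r 1 = entry B b p r 0"
      by (rule coord_eqI) (use c1[rule_format, of 1] c2[rule_format, of 1] True
        in \<open>simp_all add: less\<close>)
    then show False using bppr by (simp add: inj)
  next
    case False
    have "{entry B b p r 0, entry B b p r 1, entry B b p r 2}
      \<inter> {entry B b p' r 0, entry B b p' r 1, entry B b p' r 2} \<noteq> {}"
      by (rule coord_lines_meet)
        (use c1[rule_format, of 1] c1[rule_format, of 2] c2[rule_format, of 1] c2[rule_format, of 2]
          bppr in \<open>simp_all add: less inj\<close>)
    then show False using bppr False by (simp add: inj)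
  qed
qed

lemma not_minicol_const_both_coords:
  assumes sm: "semimagic B" and bbpc: "b < 3" "b' < 3" "p < 3" "c < 3"
  shows "\<not> (minicol_const coord1 B b p c \<and> minicol_const coord2 B b' p c)"
proof
  assume const: "minicol_const coord1 B b p c \<and> minicol_const coord2 B b' p c"
  have s: "sudoku B" using sm by (rule semimagic_sudoku)
  note inj = entry_col_inject[OF s bbpc(3,4)] and less = entry_less_9[OF s]
  from const have c1: "\<forall>k<3. coord1 (entry B b p k c) = coord1 (entry B b p 0 c)"
    unfolding minicol_const_def by (rule conjunct1)
  from const have c2: "\<forall>k<3. coord2 (entry B b' p k c) = coord2 (entry B b' p 0 c)"
    unfolding minicol_const_def by (rule conjunct2)
  show False
  proof (cases "b = b'")
    case True
    have "entry B b p 1 c = entry B b p 0 c"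
      by (rule coord_eqI) (use c1[rule_format, of 1] c2[rule_format, of 1] True
        in \<open>simp_all add: less\<close>)
    then show False using bbpc by (simp add: inj)
  next
    case False
    have "{entry B b p 0 c, entry B b p 1 c, entry B b p 2 c}
      \<inter> {entry B b' p 0 c, entry B b' p 1 c, entry B b' p 2 c} \<noteq> {}"
      by (rule coord_lines_meet)
        (use c1[rule_format, of 1] c1[rule_format, of 2] c2[rule_format, of 1] c2[rule_format, of 2]
          bbpc in \<open>simp_all add: less inj\<close>)
    then show False using bbpc False by (simp add: inj)
  qed
qed

lemma block_pattern:
  assumes sm: "semimagic B" and bpr: "b < 3" "p < 3" "r0 < 3"
    and row: "minirow_const coord1 B b p r0"
  shows "(\<forall>r<3. minirow_const coord1 B b p r) \<and> (\<forall>c<3. minicol_const coord2 B b p c)"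
proof -
  have cols: "minicol_const coord2 B b p c" if "c < 3" for c
    using semimagic_minicol_const[OF sm bpr(1,2) that] row
      not_minirow_const_and_minicol_const[OF sm _ bpr that] by blast
  have "minirow_const coord1 B b p r" if "r < 3" for r
    using semimagic_minirow_const[OF sm bpr(1,2) that] cols[of 0]
      not_minirow_const_and_minicol_const[OF sm _ bpr(1,2) that, of coord2 0] by auto
  with cols show ?thesis by blast
qed

text \<open>The pattern spreads from block \<open>(0, 0)\<close> along band 0, since a row cannot mix the two
  kinds of minirows, and then down every pillar, since a column cannot mix the two kinds of
  minicols.\<close>

lemma board_pattern:
  assumes sm: "semimagic B" and row: "minirow_const coord1 B 0 0 0" and bp: "b < 3" "p < 3"
  shows "(\<forall>r<3. minirow_const coord1 B b p r) \<and> (\<forall>c<3. minicol_const coord2 B b p c)"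
proof -
  have "minirow_const coord1 B 0 p 0"
    using semimagic_minirow_const[OF sm _ bp(2), of 0 0] row
      not_minirow_const_both_coords[OF sm _ _ bp(2), of 0 0 0] by auto
  then have "minicol_const coord2 B 0 p 0"
    using block_pattern[OF sm _ bp(2), of 0 0] by auto
  then have "minicol_const coord2 B b p 0"
    using semimagic_minicol_const[OF sm bp, of 0]
      not_minicol_const_both_coords[OF sm bp(1) _ bp(2), of 0 0] by auto
  then have "minirow_const coord1 B b p 0"
    using semimagic_minirow_const[OF sm bp, of 0]
      not_minirow_const_and_minicol_const[OF sm _ bp, of coord2 0 0] by auto
  then show ?thesis using block_pattern[OF sm bp, of 0] by auto
qed

lemma minirow_coord1_value:
  assumes sm: "semimagic B" and row: "minirow_const coord1 B 0 0 0"
    and "b < 3" "p < 3" "r < 3" "k < 3"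
  shows "coord1 (entry B b p r k) = coord1 (B (3 * b + r, 3 * p))"
proof -
  have "minirow_const coord1 B b p r" using board_pattern[OF sm row assms(3,4)] assms(5) by blast
  from this[unfolded minirow_const_def, rule_format, OF assms(6)] show ?thesis
    by (simp add: entry_def)
qed

lemma minicol_coord2_value:
  assumes sm: "semimagic B" and row: "minirow_const coord1 B 0 0 0"
    and "b < 3" "p < 3" "k < 3" "c < 3"
  shows "coord2 (entry B b p k c) = coord2 (B (3 * b, 3 * p + c))"
proof -
  have "minicol_const coord2 B b p c" using board_pattern[OF sm row assms(3,4)] assms(6) by blast
  from this[unfolded minicol_const_def, rule_format, OF assms(5)] show ?thesis
    by (simp add: entry_def)
qed

text \<open>In \<open>coord_board R C\<close>, \<open>R i p\<close> is the value of \<open>coord1\<close> on row \<open>i\<close> inside pillar \<open>p\<close>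
  and \<open>C b j\<close> the value of \<open>coord2\<close> on column \<open>j\<close> inside band \<open>b\<close>; the \<open>mod 3\<close> only makes
  every pair of arrays yield a board of symbols.\<close>

definition coord_board :: "(nat \<Rightarrow> nat \<Rightarrow> nat) \<Rightarrow> (nat \<Rightarrow> nat \<Rightarrow> nat) \<Rightarrow> nat \<times> nat \<Rightarrow> nat" where
  "coord_board R C =
     (\<lambda>(i, j). if i < 9 \<and> j < 9 then symbol (R i (j div 3) mod 3) (C (i div 3) j mod 3) else 0)"

definition latin3 :: "(nat \<Rightarrow> nat \<Rightarrow> nat) \<Rightarrow> bool" where
  "latin3 L \<longleftrightarrow> (\<forall>r<3. \<forall>p<3. L r p < 3) \<and>
     (\<forall>r<3. \<forall>p<3. \<forall>p'<3. L r p = L r p' \<longrightarrow> p = p') \<and>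
     (\<forall>r<3. \<forall>r'<3. \<forall>p<3. L r p = L r' p \<longrightarrow> r = r')"

definition latin_stack :: "(nat \<Rightarrow> nat \<Rightarrow> nat) \<Rightarrow> bool" where
  "latin_stack R \<longleftrightarrow> (\<forall>b<3. latin3 (\<lambda>r p. R (3 * b + r) p))"

lemma latin3I:
  assumes "\<And>r p. r < 3 \<Longrightarrow> p < 3 \<Longrightarrow> L r p < 3"
    and "\<And>r p p'. r < 3 \<Longrightarrow> p < 3 \<Longrightarrow> p' < 3 \<Longrightarrow> p \<noteq> p' \<Longrightarrow> L r p \<noteq> L r p'"
    and "\<And>r r' p. r < 3 \<Longrightarrow> r' < 3 \<Longrightarrow> p < 3 \<Longrightarrow> r \<noteq> r' \<Longrightarrow> L r p \<noteq> L r' p"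
  shows "latin3 L"
  using assms unfolding latin3_def by blast

lemma latin3_less: "latin3 L \<Longrightarrow> r < 3 \<Longrightarrow> p < 3 \<Longrightarrow> L r p < 3"
  unfolding latin3_def by blast

lemma latin3_row_inj: "latin3 L \<Longrightarrow> r < 3 \<Longrightarrow> p < 3 \<Longrightarrow> p' < 3 \<Longrightarrow> L r p = L r p' \<Longrightarrow> p = p'"
  unfolding latin3_def by blast

lemma latin3_col_inj: "latin3 L \<Longrightarrow> r < 3 \<Longrightarrow> r' < 3 \<Longrightarrow> p < 3 \<Longrightarrow> L r p = L r' p \<Longrightarrow> r = r'"
  unfolding latin3_def by blast

lemma semimagic_eq_coord_board:
  assumes sm: "semimagic B" and row: "minirow_const coord1 B 0 0 0"
  shows "B = coord_board (\<lambda>i p. coord1 (B (i, 3 * p))) (\<lambda>b j. coord2 (B (3 * b, j)))"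
proof (rule ext, clarify)
  fix i j :: nat
  have s: "sudoku B" using sm by (rule semimagic_sudoku)
  show "B (i, j) = coord_board (\<lambda>i p. coord1 (B (i, 3 * p))) (\<lambda>b j. coord2 (B (3 * b, j))) (i, j)"
  proof (cases "i < 9 \<and> j < 9")
    case True
    then have ij: "i div 3 < 3" "j div 3 < 3" "i mod 3 < 3" "j mod 3 < 3" by auto
    have "coord1 (B (i, j)) = coord1 (B (i, 3 * (j div 3)))"
      using minirow_coord1_value[OF sm row ij] True by (simp add: entry_cell)
    moreover have "coord2 (B (i, j)) = coord2 (B (3 * (i div 3), j))"
      using minicol_coord2_value[OF sm row ij(1,2,3,4)] True by (simp add: entry_cell)
    ultimately show ?thesis
      using True symbol_coord[OF sudoku_less_9[OF s, of "(i, j)"]]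
      by (simp add: coord_board_def coord1_less coord2_less)
  next
    case False
    then show ?thesis using sudoku_outside[OF s, of "(i, j)"] by (auto simp: coord_board_def)
  qed
qed

lemma semimagic_latin_rows:
  assumes sm: "semimagic B" and row: "minirow_const coord1 B 0 0 0"
  shows "latin_stack (\<lambda>i p. coord1 (B (i, 3 * p)))"
  unfolding latin_stack_def
proof (intro allI impI latin3I)
  fix b r p p' r' :: nat
  assume b: "b < 3"
  have s: "sudoku B" using sm by (rule semimagic_sudoku)
  note val = minirow_coord1_value[OF sm row b] and less = entry_less_9[OF s]
  show "coord1 (B (3 * b + r, 3 * p)) < 3" by (rule coord1_less)
  show "coord1 (B (3 * b + r, 3 * p)) \<noteq> coord1 (B (3 * b + r, 3 * p'))"
    if "r < 3" "p < 3" "p' < 3" "p \<noteq> p'"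
  proof
    assume eq: "coord1 (B (3 * b + r, 3 * p)) = coord1 (B (3 * b + r, 3 * p'))"
    show False
      by (rule coord_no_four[of coord1 "entry B b p r 0" "entry B b p r 1" "entry B b p r 2"
        "entry B b p' r 0"])
        (use that b eq val in \<open>simp_all add: less entry_row_inject[OF s]\<close>)
  qed
  show "coord1 (B (3 * b + r, 3 * p)) \<noteq> coord1 (B (3 * b + r', 3 * p))"
    if "r < 3" "r' < 3" "p < 3" "r \<noteq> r'"
  proof
    assume eq: "coord1 (B (3 * b + r, 3 * p)) = coord1 (B (3 * b + r', 3 * p))"
    show False
      by (rule coord_no_four[of coord1 "entry B b p r 0" "entry B b p r 1" "entry B b p r 2"
        "entry B b p r' 0"])
        (use that b eq val in \<open>simp_all add: less entry_block_inject[OF s]\<close>)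
  qed
qed

lemma semimagic_latin_cols:
  assumes sm: "semimagic B" and row: "minirow_const coord1 B 0 0 0"
  shows "latin_stack (\<lambda>j b. coord2 (B (3 * b, j)))"
  unfolding latin_stack_def
proof (intro allI impI latin3I)
  fix p c b b' c' :: nat
  assume p: "p < 3"
  have s: "sudoku B" using sm by (rule semimagic_sudoku)
  note val = minicol_coord2_value[OF sm row _ p] and less = entry_less_9[OF s]
  show "coord2 (B (3 * b, 3 * p + c)) < 3" by (rule coord2_less)
  show "coord2 (B (3 * b, 3 * p + c)) \<noteq> coord2 (B (3 * b', 3 * p + c))"
    if "c < 3" "b < 3" "b' < 3" "b \<noteq> b'"
  proof
    assume eq: "coord2 (B (3 * b, 3 * p + c)) = coord2 (B (3 * b', 3 * p + c))"
    show False
      by (rule coord_no_four[of coord2 "entry B b p 0 c" "entry B b p 1 c" "entry B b p 2 c"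
        "entry B b' p 0 c"])
        (use that p eq val in \<open>simp_all add: less entry_col_inject[OF s]\<close>)
  qed
  show "coord2 (B (3 * b, 3 * p + c)) \<noteq> coord2 (B (3 * b, 3 * p + c'))"
    if "c < 3" "c' < 3" "b < 3" "c \<noteq> c'"
  proof
    assume eq: "coord2 (B (3 * b, 3 * p + c)) = coord2 (B (3 * b, 3 * p + c'))"
    show False
      by (rule coord_no_four[of coord2 "entry B b p 0 c" "entry B b p 1 c" "entry B b p 2 c"
        "entry B b p 0 c'"])
        (use that p eq val in \<open>simp_all add: less entry_block_inject[OF s]\<close>)
  qed
qed

lemma semimagic_relabel_coord_board:
  assumes sm: "semimagic B"
  shows "\<exists>\<pi> R C. (\<pi> = id \<or> \<pi> = coord_swap) \<and> relabel \<pi> B = coord_board R C \<and>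
    latin_stack R \<and> latin_stack (\<lambda>j b. C b j)"
proof -
  have normal_form: "\<exists>R C. B' = coord_board R C \<and> latin_stack R \<and> latin_stack (\<lambda>j b. C b j)"
    if "semimagic B'" "minirow_const coord1 B' 0 0 0" for B'
    using semimagic_eq_coord_board[OF that] semimagic_latin_rows[OF that] semimagic_latin_cols[OF that]
    by blast
  show ?thesis
  proof (cases "minirow_const coord1 B 0 0 0")
    case True
    then show ?thesis
      using normal_form[OF sm] relabel_id[OF sudoku_symbol_board[OF semimagic_sudoku[OF sm]]]
        by auto
  next
    case False
    have row2: "minirow_const coord2 B 0 0 0"
      using semimagic_minirow_const[OF sm, of 0 0 0] False by simp
    have sm': "semimagic (relabel coord_swap B)"
      using coord_swap_in_S_sm sm unfolding S_sm_def by blast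
    have "minirow_const coord1 (relabel coord_swap B) 0 0 0"
      unfolding minirow_const_def
    proof (intro allI impI)
      fix c :: nat assume "c < 3"
      then show "coord1 (entry (relabel coord_swap B) 0 0 0 c)
        = coord1 (entry (relabel coord_swap B) 0 0 0 0)"
        using row2[unfolded minirow_const_def, rule_format, OF \<open>c < 3\<close>]
          entry_less_9[OF semimagic_sudoku[OF sm]]
        by (simp add: entry_relabel coord_swap_coords)
    qed
    then show ?thesis using normal_form[OF sm'] by auto
  qed
qed

section \<open>Moves on coordinate boards\<close>

lemma less_9_div_mod_cases:
  "(i::nat) < 9 \<Longrightarrow>
    i = i mod 3 \<and> i div 3 = 0 \<or> i = 3 + i mod 3 \<and> i div 3 = 1 \<or> i = 6 + i mod 3 \<and> i div 3 = 2"
  by (drule less_9_cases) auto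

lemma permutes_3I:
  assumes "\<And>x. x < 3 \<Longrightarrow> f x < 3" "\<And>x y. x < 3 \<Longrightarrow> y < 3 \<Longrightarrow> f x = f y \<Longrightarrow> x = y"
    and "\<And>x. 3 \<le> x \<Longrightarrow> f x = x"
  shows "f permutes {0..<(3::nat)}"
proof (rule bij_imp_permutes)
  have inj: "inj_on f {0..<3}" using assms(2) by (auto intro: inj_onI)
  have "f ` {0..<3} \<subseteq> {0..<3}" using assms(1) by auto
  then have "f ` {0..<3} = {0..<3}" using endo_inj_surj[OF _ _ inj] by simp
  with inj show "bij_betw f {0..<3} {0..<3}" by (simp add: bij_betw_def)
qed (use assms(3) in auto)

definition coord_orbit :: "(nat \<Rightarrow> nat \<Rightarrow> nat) \<Rightarrow> (nat \<Rightarrow> nat \<Rightarrow> nat) \<Rightarrow> (nat \<times> nat \<Rightarrow> nat) set" where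
  "coord_orbit R C = G_sm_orbit (coord_board R C)"

lemma coord_board_symbol_board: "symbol_board (coord_board R C)"
  by (auto simp: symbol_board_def coord_board_def symbol_less)

lemma coord_orbit_cong:
  assumes "\<And>i p. i < 9 \<Longrightarrow> p < 3 \<Longrightarrow> R i p = R' i p" "\<And>b j. b < 3 \<Longrightarrow> j < 9 \<Longrightarrow> C b j = C' b j"
  shows "coord_orbit R C = coord_orbit R' C'"
proof -
  have "coord_board R C = coord_board R' C'"
    using assms by (auto simp: coord_board_def fun_eq_iff)
  then show ?thesis by (simp add: coord_orbit_def)
qed

lemma coord_orbit_move:
  "\<sigma> \<in> H9 \<Longrightarrow> move \<sigma> (coord_board R C) = coord_board R' C' \<Longrightarrow> coord_orbit R C = coord_orbit R' C'"
  unfolding coord_orbit_def using G_sm_orbit_move[OF coord_board_symbol_board, of \<sigma> R C] by simp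

text \<open>Transposing the cells exchanges the roles of the two coordinates; \<open>coord_swap\<close> exchanges
  them back.\<close>

lemma coord_orbit_transpose: "coord_orbit R C = coord_orbit (\<lambda>i p. C p i) (\<lambda>b j. R j b)"
proof -
  have "relabel coord_swap (move transpose_cells (coord_board R C))
    = coord_board (\<lambda>i p. C p i) (\<lambda>b j. R j b)"
    by (auto simp: fun_eq_iff relabel_def move_def coord_board_def transpose_cells_def coord_swap_symbol)
  moreover have "transpose_cells \<in> H9"
    by (rule H9_gens_in_H9) (simp add: H9_gens_def)
  ultimately show ?thesis
    unfolding coord_orbit_def
    using G_sm_orbit_relabel_move[OF coord_board_symbol_board _ coord_swap_in_S_sm coord_swap_in_S_sm
        coord_swap_involution, of transpose_cells R C] by simp
qed

lemma coord_orbit_band_perm: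
  assumes P: "P permutes {0..<3}"
  shows "coord_orbit R C = coord_orbit (\<lambda>i p. R (3 * P (i div 3) + i mod 3) p) (\<lambda>b j. C (P b) j)"
proof (rule coord_orbit_move)
  show "band_perm P \<in> H9" using P by (intro H9_gens_in_H9) (auto simp: H9_gens_def)
  show "move (band_perm P) (coord_board R C) =
    coord_board (\<lambda>i p. R (3 * P (i div 3) + i mod 3) p) (\<lambda>b j. C (P b) j)"
  proof (rule ext, clarify)
    fix i j :: nat
    show "move (band_perm P) (coord_board R C) (i, j) =
      coord_board (\<lambda>i p. R (3 * P (i div 3) + i mod 3) p) (\<lambda>b j. C (P b) j) (i, j)"
      using permutes_3_less[OF P, of "i div 3"]
      by (cases "i < 9") (auto simp: move_def coord_board_def band_perm_def three_mult_add_simps)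
  qed
qed

lemma coord_orbit_row_perm:
  assumes "b < 3" "q permutes {0..<3}"
  shows "coord_orbit R C =
    coord_orbit (\<lambda>i p. if i div 3 = b then R (3 * b + q (i mod 3)) p else R i p) C"
proof (rule coord_orbit_move)
  show "row_perm b q \<in> H9" using assms by (intro H9_gens_in_H9) (auto simp: H9_gens_def)
  show "move (row_perm b q) (coord_board R C) =
    coord_board (\<lambda>i p. if i div 3 = b then R (3 * b + q (i mod 3)) p else R i p) C"
    using permutes_3_less[OF assms(2)] assms(1)
    by (auto simp: fun_eq_iff move_def coord_board_def row_perm_def three_mult_add_simps)
qed

lemma coord_orbit_rows_perm:
  assumes "\<And>k. k < 3 \<Longrightarrow> \<rho> k permutes {0..<3}"
  shows "coord_orbit R C = coord_orbit (\<lambda>i p. R (3 * (i div 3) + \<rho> (i div 3) (i mod 3)) p) C"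
proof -
  let ?step = "\<lambda>b R i p. if i div 3 = b then R (3 * b + \<rho> b (i mod 3)) p else R i p"
  have "coord_orbit R C = coord_orbit (?step 0 R) C"
    by (rule coord_orbit_row_perm) (simp_all add: assms)
  also have "\<dots> = coord_orbit (?step 1 (?step 0 R)) C"
    by (rule coord_orbit_row_perm) (simp_all add: assms)
  also have "\<dots> = coord_orbit (?step 2 (?step 1 (?step 0 R))) C"
    by (rule coord_orbit_row_perm) (simp_all add: assms)
  also have "\<dots> = coord_orbit (\<lambda>i p. R (3 * (i div 3) + \<rho> (i div 3) (i mod 3)) p) C"
  proof (rule coord_orbit_cong)
    fix i p :: nat assume "i < 9" "p < 3"
    then show "?step 2 (?step 1 (?step 0 R)) i p = R (3 * (i div 3) + \<rho> (i div 3) (i mod 3)) p"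
      using less_9_div_mod_cases[of i] permutes_3_less[OF assms, of _ "i mod 3"]
      by (auto simp: three_mult_add_simps)
  qed simp
  finally show ?thesis .
qed

lemma coord_orbit_cols_perm:
  assumes "\<And>k. k < 3 \<Longrightarrow> \<rho> k permutes {0..<3}"
  shows "coord_orbit R C = coord_orbit R (\<lambda>b j. C b (3 * (j div 3) + \<rho> (j div 3) (j mod 3)))"
  using coord_orbit_rows_perm[OF assms, where R = "\<lambda>i p. C p i" and C = "\<lambda>b j. R j b"]
  by (simp add: coord_orbit_transpose[of R])

lemma latin_stack_band: "latin_stack R \<Longrightarrow> b < 3 \<Longrightarrow> latin3 (\<lambda>r p. R (3 * b + r) p)"
  unfolding latin_stack_def by blast

lemma latin_stack_less:
  assumes "latin_stack R" "i < 9" "p < 3"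
  shows "R i p < 3"
proof -
  have "R (3 * (i div 3) + i mod 3) p < 3"
    using latin3_less[OF latin_stack_band[OF assms(1)], of "i div 3" "i mod 3" p] assms(2,3) by simp
  then show ?thesis by simp
qed

lemma latin_stack_row:
  assumes "latin_stack R" "b < 3" "r < 3" "p < 3" "p' < 3" "R (3 * b + r) p = R (3 * b + r) p'"
  shows "p = p'"
  using latin3_row_inj[OF latin_stack_band[OF assms(1,2)] assms(3-6)] .

lemma latin_stack_col:
  assumes "latin_stack R" "b < 3" "r < 3" "r' < 3" "p < 3" "R (3 * b + r) p = R (3 * b + r') p"
  shows "r = r'"
  using latin3_col_inj[OF latin_stack_band[OF assms(1,2)] assms(3-6)] .

lemma entry_coord_board:
  assumes R: "latin_stack R" and C: "latin_stack (\<lambda>j b. C b j)" and "b < 3" "p < 3" "r < 3" "c < 3"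
  shows "entry (coord_board R C) b p r c = symbol (R (3 * b + r) p) (C b (3 * p + c))"
  using assms latin_stack_less[OF R, of "3 * b + r" p] latin_stack_less[OF C, of "3 * p + c" b]
  by (simp add: entry_def coord_board_def three_mult_add_simps)

lemma coord_board_entry_inject:
  assumes R: "latin_stack R" and C: "latin_stack (\<lambda>j b. C b j)"
    and lt: "b < 3" "p < 3" "r < 3" "c < 3" "b' < 3" "p' < 3" "r' < 3" "c' < 3"
    and line: "b = b' \<and> r = r' \<or> p = p' \<and> c = c' \<or> b = b' \<and> p = p'"
    and eq: "entry (coord_board R C) b p r c = entry (coord_board R C) b' p' r' c'"
  shows "b = b' \<and> p = p' \<and> r = r' \<and> c = c'"
proof -
  have eqR: "R (3 * b + r) p = R (3 * b' + r') p'" and eqC: "C b (3 * p + c) = C b' (3 * p' + c')"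
    using eq lt latin_stack_less[OF R] latin_stack_less[OF C]
    by (simp_all add: entry_coord_board[OF R C] symbol_inject three_mult_add_less_9)
  from line show ?thesis
  proof (elim disjE conjE)
    assume "b = b'" "r = r'"
    moreover from this have "p = p'" using latin_stack_row[OF R lt(1,3,2,6)] eqR by simp
    moreover from calculation have "c = c'" using latin_stack_col[OF C lt(2,4,8,1)] eqC by simp
    ultimately show ?thesis by simp
  next
    assume "p = p'" "c = c'"
    moreover from this have "b = b'" using latin_stack_row[OF C lt(2,4,1,5)] eqC by simp
    moreover from calculation have "r = r'" using latin_stack_col[OF R lt(1,3,7,2)] eqR by simp
    ultimately show ?thesis by simp
  next
    assume "b = b'" "p = p'"
    then show ?thesis
      using latin_stack_col[OF R lt(1,3,7,2)] latin_stack_col[OF C lt(2,4,8,1)] eqR eqC by simp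
  qed
qed

lemma image_eq_0_9:
  assumes "inj_on f A" "card A = 9" "\<And>x. x \<in> A \<Longrightarrow> f x < 9"
  shows "f ` A = {0..<(9::nat)}"
proof (rule card_subset_eq)
  show "f ` A \<subseteq> {0..<9}" using assms(3) by auto
  show "card (f ` A) = card {0..<(9::nat)}" using card_image[OF assms(1)] assms(2) by simp
qed simp

lemma coord_board_sudoku:
  assumes R: "latin_stack R" and C: "latin_stack (\<lambda>j b. C b j)"
  shows "sudoku (coord_board R C)"
proof (rule sudokuI)
  let ?X = "coord_board R C"
  note inj = coord_board_entry_inject[OF R C]
  have less: "?X c < 9" for c by (cases c) (simp add: coord_board_def symbol_less)
  have div_mod_eq: "j = j'" if "j div 3 = j' div 3 \<and> j mod 3 = j' mod 3" for j j' :: nat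
    using that by (metis div_mult_mod_eq)
  show "?X c = 0" if "c \<notin> cells" for c using that by (cases c) (auto simp: coord_board_def)
  show "(\<lambda>j. ?X (i, j)) ` {0..<9} = {0..<9}" if "i < 9" for i
  proof (rule image_eq_0_9)
    show "inj_on (\<lambda>j. ?X (i, j)) {0..<9}"
    proof (rule inj_onI)
      fix j j' assume "j \<in> {0..<9}" "j' \<in> {0..<9}" "?X (i, j) = ?X (i, j')"
      with that show "j = j'"
        using inj[of "i div 3" "j div 3" "i mod 3" "j mod 3" "i div 3" "j' div 3" "i mod 3" "j' mod 3"]
        by (intro div_mod_eq) (simp add: entry_cell)
    qed
  qed (simp_all add: less)
  show "(\<lambda>i. ?X (i, j)) ` {0..<9} = {0..<9}" if "j < 9" for j
  proof (rule image_eq_0_9)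
    show "inj_on (\<lambda>i. ?X (i, j)) {0..<9}"
    proof (rule inj_onI)
      fix i i' assume "i \<in> {0..<9}" "i' \<in> {0..<9}" "?X (i, j) = ?X (i', j)"
      with that show "i = i'"
        using inj[of "i div 3" "j div 3" "i mod 3" "j mod 3" "i' div 3" "j div 3" "i' mod 3" "j mod 3"]
        by (intro div_mod_eq) (simp add: entry_cell)
    qed
  qed (simp_all add: less)
  show "(\<lambda>(r, c). entry ?X b p r c) ` ({0..<3} \<times> {0..<3}) = {0..<9}" if "b < 3" "p < 3" for b p
  proof (rule image_eq_0_9)
    show "inj_on (\<lambda>(r, c). entry ?X b p r c) ({0..<3} \<times> {0..<3})"
    proof (rule inj_onI)
      fix x y assume "x \<in> {0..<3} \<times> {0..<3}" "y \<in> {0..<3} \<times> {0..<3}"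
        and "(\<lambda>(r, c). entry ?X b p r c) x = (\<lambda>(r, c). entry ?X b p r c) y"
      with that show "x = y" using inj[of b p "fst x" "snd x" b p "fst y" "snd y"]
        by (cases x, cases y) simp
    qed
  qed (auto simp: entry_def less)
qed

lemma sum_perm_3:
  "\<lbrakk>x < 3; y < 3; z < 3; distinct [x, y, z]\<rbrakk> \<Longrightarrow> f x + f y + f z = f 0 + f 1 + (f 2 :: nat)"
  for x y z :: nat
  by (auto dest!: less_3_cases)

lemma symbol_row_sum: "a < 3 \<Longrightarrow> symbol a 0 + symbol a 1 + symbol a 2 = 12"
  and symbol_col_sum: "a < 3 \<Longrightarrow> symbol 0 a + symbol 1 a + symbol 2 a = 12"
  by (auto dest!: less_3_cases simp: symbol_def)

lemma coord_board_semimagic: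
  assumes R: "latin_stack R" and C: "latin_stack (\<lambda>j b. C b j)"
  shows "semimagic (coord_board R C)"
proof (rule semimagicI)
  note val = entry_coord_board[OF R C]
  show "sudoku (coord_board R C)" by (rule coord_board_sudoku[OF R C])
  show "entry (coord_board R C) b p r 0 + entry (coord_board R C) b p r 1
    + entry (coord_board R C) b p r 2 = 12"
    if bpr: "b < 3" "p < 3" "r < 3" for b p r
  proof -
    let ?a = "R (3 * b + r) p"
    have "entry (coord_board R C) b p r 0 + entry (coord_board R C) b p r 1
      + entry (coord_board R C) b p r 2
        = symbol ?a (C b (3 * p + 0)) + symbol ?a (C b (3 * p + 1)) + symbol ?a (C b (3 * p + 2))"
      using bpr by (simp add: val)
    also have "\<dots> = symbol ?a 0 + symbol ?a 1 + symbol ?a 2"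
    proof (rule sum_perm_3)
      show "C b (3 * p + 0) < 3" "C b (3 * p + 1) < 3" "C b (3 * p + 2) < 3"
        using latin_stack_less[OF C] bpr by simp_all
      show "distinct [C b (3 * p + 0), C b (3 * p + 1), C b (3 * p + 2)]"
        using latin_stack_col[OF C, of p 0 1 b] latin_stack_col[OF C, of p 0 2 b]
          latin_stack_col[OF C, of p 1 2 b] bpr by auto
    qed
    also have "\<dots> = 12" using symbol_row_sum latin_stack_less[OF R] bpr by simp
    finally show ?thesis .
  qed
  show "entry (coord_board R C) b p 0 c + entry (coord_board R C) b p 1 c
    + entry (coord_board R C) b p 2 c = 12"
    if bpc: "b < 3" "p < 3" "c < 3" for b p c
  proof -
    let ?a = "C b (3 * p + c)"
    have "entry (coord_board R C) b p 0 c + entry (coord_board R C) b p 1 c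
      + entry (coord_board R C) b p 2 c
        = symbol (R (3 * b + 0) p) ?a + symbol (R (3 * b + 1) p) ?a + symbol (R (3 * b + 2) p) ?a"
      using bpc by (simp add: val)
    also have "\<dots> = symbol 0 ?a + symbol 1 ?a + symbol 2 ?a"
    proof (rule sum_perm_3[where f = "\<lambda>x. symbol x ?a"])
      show "R (3 * b + 0) p < 3" "R (3 * b + 1) p < 3" "R (3 * b + 2) p < 3"
        using latin_stack_less[OF R] bpc by simp_all
      show "distinct [R (3 * b + 0) p, R (3 * b + 1) p, R (3 * b + 2) p]"
        using latin_stack_col[OF R, of b 0 1 p] latin_stack_col[OF R, of b 0 2 p]
          latin_stack_col[OF R, of b 1 2 p] bpc by auto
    qed
    also have "\<dots> = 12" using symbol_col_sum latin_stack_less[OF C] bpc by simp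
    finally show ?thesis .
  qed
qed

section \<open>Normal forms of coordinate boards\<close>

lemma latin3_completion:
  fixes a1 b1 c1 a2 b2 c2 :: nat
  assumes "a1 < 3" "b1 < 3" "c1 < 3" "a2 < 3" "b2 < 3" "c2 < 3"
    and "a1 \<noteq> 0" "a2 \<noteq> 0" "a1 \<noteq> a2" "b1 \<noteq> 1" "b2 \<noteq> 1" "b1 \<noteq> b2" "c1 \<noteq> 2" "c2 \<noteq> 2" "c1 \<noteq> c2"
    and "a1 \<noteq> b1" "b1 \<noteq> c1" "a1 \<noteq> c1" "a2 \<noteq> b2" "b2 \<noteq> c2" "a2 \<noteq> c2"
  shows "a1 = 1 \<and> b1 = 2 \<and> c1 = 0 \<and> a2 = 2 \<and> b2 = 0 \<and> c2 = 1 \<or>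
    a1 = 2 \<and> b1 = 0 \<and> c1 = 1 \<and> a2 = 1 \<and> b2 = 2 \<and> c2 = 0"
  using assms by (auto dest!: less_3_cases)

lemma latin3_identity_column:
  assumes L: "latin3 L" and col0: "L 0 0 = 0" "L 1 0 = 1" "L 2 0 = 2"
  shows "(\<forall>r<3. \<forall>p<3. L r p = (r + p) mod 3) \<or> (\<forall>r<3. \<forall>p<3. L r p = (r + 2 * p) mod 3)"
proof -
  have "L 0 1 = 1 \<and> L 1 1 = 2 \<and> L 2 1 = 0 \<and> L 0 2 = 2 \<and> L 1 2 = 0 \<and> L 2 2 = 1 \<or>
      L 0 1 = 2 \<and> L 1 1 = 0 \<and> L 2 1 = 1 \<and> L 0 2 = 1 \<and> L 1 2 = 2 \<and> L 2 2 = 0"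
    by (rule latin3_completion) (use L col0 in \<open>simp_all add: latin3_def all_less_3\<close>)
  then show ?thesis using col0 unfolding all_less_3 by auto
qed

lemma latin3_reorder_rows:
  assumes L: "latin3 L" and q: "q permutes {0..<3}"
  shows "latin3 (\<lambda>r p. L (q r) p)"
proof (rule latin3I)
  note q3 = permutes_3_less[OF q]
  show "L (q r) p < 3" if "r < 3" "p < 3" for r p
    using latin3_less[OF L q3[OF that(1)] that(2)] .
  show "L (q r) p \<noteq> L (q r) p'" if "r < 3" "p < 3" "p' < 3" "p \<noteq> p'" for r p p'
    using latin3_row_inj[OF L q3[OF that(1)] that(2,3)] that(4) by blast
  show "L (q r) p \<noteq> L (q r') p" if "r < 3" "r' < 3" "p < 3" "r \<noteq> r'" for r r' p
  proof -
    have "q r \<noteq> q r'" using permutes_inj_on[OF q, of "{0..<3}"] that by (simp add: inj_on_eq_iff)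
    then show ?thesis using latin3_col_inj[OF L q3[OF that(1)] q3[OF that(2)] that(3)] by blast
  qed
qed

lemma latin3_normal_form:
  assumes L: "latin3 L"
  obtains q s where "q permutes {0..<3}" "s = 1 \<or> s = 2"
    "\<And>r p. r < 3 \<Longrightarrow> p < 3 \<Longrightarrow> L (q r) p = (r + s * p) mod 3"
proof -
  define f where "f r = (if r < 3 then L r 0 else r)" for r
  have f: "f permutes {0..<3}"
  proof (rule permutes_3I)
    show "f x < 3" if "x < 3" for x using latin3_less[OF L that, of 0] that by (simp add: f_def)
    show "x = y" if "x < 3" "y < 3" "f x = f y" for x y
      using latin3_col_inj[OF L that(1,2), of 0] that by (simp add: f_def)
    show "f x = x" if "3 \<le> x" for x using that by (simp add: f_def)
  qed
  define q where "q = inv f"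
  have q: "q permutes {0..<3}" unfolding q_def using permutes_inv[OF f] .
  have "L (q r) 0 = r" if "r < 3" for r
    using permutes_inverses(1)[OF f, of r] permutes_3_less[OF q that] by (simp add: q_def f_def)
  then have "(\<forall>r<3. \<forall>p<3. L (q r) p = (r + 1 * p) mod 3) \<or> (\<forall>r<3. \<forall>p<3. L (q r) p = (r
    + 2 * p) mod 3)"
    using latin3_identity_column[OF latin3_reorder_rows[OF L q]] by simp
  then show ?thesis
  proof
    assume "\<forall>r<3. \<forall>p<3. L (q r) p = (r + 1 * p) mod 3"
    then show ?thesis using that[OF q] by blast
  next
    assume "\<forall>r<3. \<forall>p<3. L (q r) p = (r + 2 * p) mod 3"
    then show ?thesis using that[OF q] by blast
  qed
qed

definition slope_array :: "(nat \<Rightarrow> nat) \<Rightarrow> nat \<Rightarrow> nat \<Rightarrow> nat" where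
  "slope_array s i p = (i mod 3 + s (i div 3) * p) mod 3"

abbreviation unit3 :: "nat \<Rightarrow> bool" where
  "unit3 x \<equiv> x = 1 \<or> x = 2"

lemma latin3_linear: "a = 1 \<or> a = 2 \<Longrightarrow> latin3 (\<lambda>r p. (r + a * p) mod 3)"
  unfolding latin3_def all_less_3 by auto

lemma latin3_cong: "(\<And>r p. r < 3 \<Longrightarrow> p < 3 \<Longrightarrow> L r p = L' r p) \<Longrightarrow> latin3 L = latin3 L'"
  unfolding latin3_def by simp

lemma slope_array_latin_stack:
  assumes "\<forall>x<3. unit3 (s x)"
  shows "latin_stack (slope_array s)"
  unfolding latin_stack_def
proof (intro allI impI)
  fix b :: nat assume "b < 3"
  have "latin3 (\<lambda>r p. slope_array s (3 * b + r) p) = latin3 (\<lambda>r p. (r + s b * p) mod 3)"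
    by (rule latin3_cong) (simp add: slope_array_def three_mult_add_simps)
  then show "latin3 (\<lambda>r p. slope_array s (3 * b + r) p)"
    using latin3_linear assms \<open>b < 3\<close> by simp
qed

lemma coord_orbit_slope_rows:
  assumes R: "latin_stack R"
  obtains s where "\<forall>x<3. unit3 (s x)" "coord_orbit R C = coord_orbit (slope_array s) C"
proof -
  have "\<forall>b. \<exists>q s. b < 3 \<longrightarrow> q permutes {0..<3} \<and> unit3 s \<and>
      (\<forall>r<3. \<forall>p<3. R (3 * b + q r) p = (r + s * p) mod 3)"
    using latin3_normal_form[OF latin_stack_band[OF R]] by metis
  then obtain Q S where QS: "\<And>b. b < 3 \<Longrightarrow> Q b permutes {0..<3} \<and> unit3 (S b) \<and>
      (\<forall>r<3. \<forall>p<3. R (3 * b + Q b r) p = (r + S b * p) mod 3)"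
    by metis
  have "coord_orbit R C = coord_orbit (\<lambda>i p. R (3 * (i div 3) + Q (i div 3) (i mod 3)) p) C"
    by (rule coord_orbit_rows_perm) (use QS in blast)
  also have "\<dots> = coord_orbit (slope_array S) C"
    by (rule coord_orbit_cong) (use QS in \<open>auto simp: slope_array_def\<close>)
  finally show ?thesis using that QS by blast
qed

lemma coord_orbit_slope_cols:
  assumes C: "latin_stack (\<lambda>j b. C b j)"
  obtains t where "\<forall>x<3. unit3 (t x)" "coord_orbit R C = coord_orbit R (\<lambda>b j. slope_array t j b)"
proof -
  obtain t where t: "\<forall>x<3. unit3 (t x)"
    "coord_orbit (\<lambda>i p. C p i) (\<lambda>b j. R j b) = coord_orbit (slope_array t) (\<lambda>b j. R j b)"
    using coord_orbit_slope_rows[OF C] by blast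
  have "coord_orbit R C = coord_orbit R (\<lambda>b j. slope_array t j b)"
    using t(2) coord_orbit_transpose[of R C] coord_orbit_transpose[of "slope_array t" "\<lambda>b j. R j b"]
    by simp
  with t(1) that show ?thesis by blast
qed

text \<open>Every permutation of \<open>\<int>/3\<close> is affine, \<open>x \<mapsto> e x + c\<close> with \<open>e \<in> {1, 2}\<close>; only these are needed.\<close>

definition affine3 :: "nat \<Rightarrow> nat \<Rightarrow> nat \<Rightarrow> nat" where
  "affine3 e c x = (if x < 3 then (e * x + c) mod 3 else x)"

lemma affine3_permutes: "unit3 e \<Longrightarrow> c < 3 \<Longrightarrow> affine3 e c permutes {0..<3}"
  by (rule permutes_3I) (auto simp: affine3_def dest!: less_3_cases)

lemma mod_add_mult_mod_eq: "(m + (a mod n) * b) mod n = (m + a * b) mod (n::nat)"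
  by (metis mod_add_right_eq mod_mult_left_eq)

lemma affine_shift_mod_3:
  "((m + 2 * t * c mod 3) mod 3 + t * ((e * b + c) mod 3)) mod 3 = (m
    + (e * t mod 3) * b) mod (3::nat)"
proof -
  have "((m + 2 * t * c mod 3) mod 3 + t * ((e * b + c) mod 3)) mod 3
      = ((m + 2 * t * c mod 3) mod 3 + t * ((e * b + c) mod 3) mod 3) mod 3"
    by (simp add: mod_add_right_eq)
  also have "\<dots> = (m + 2 * t * c + t * (e * b + c)) mod 3"
    by (simp add: mod_mult_right_eq mod_add_eq mod_add_right_eq mod_add_left_eq)
  also have "m + 2 * t * c + t * (e * b + c) = m + e * t * b + 3 * (t * c)"
    by (simp add: algebra_simps)
  also have "(m + e * t * b + 3 * (t * c)) mod 3 = (m + (e * t mod 3) * b) mod 3"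
    by (simp add: mod_add_mult_mod_eq)
  finally show ?thesis .
qed

abbreviation slope_cols :: "(nat \<Rightarrow> nat) \<Rightarrow> nat \<Rightarrow> nat \<Rightarrow> nat" where
  "slope_cols t \<equiv> \<lambda>b j. slope_array t j b"

lemma coord_orbit_slopes_transpose:
  "coord_orbit (slope_array s) (slope_cols t) = coord_orbit (slope_array t) (slope_cols s)"
  using coord_orbit_transpose[of "slope_array s" "slope_cols t"] by simp

text \<open>A band permutation \<open>x \<mapsto> e x + c\<close> followed by a cyclic shift of the columns inside each
  pillar (which absorbs the translation \<open>c\<close>) multiplies every column slope by \<open>e\<close>.\<close>

lemma coord_orbit_band_affine:
  assumes e: "unit3 e" and c: "c < 3"
  shows "coord_orbit (slope_array s) (slope_cols t) =
    coord_orbit (slope_array (\<lambda>x. s (affine3 e c x))) (slope_cols (\<lambda>x. e * t x mod 3))"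
proof -
  let ?P = "affine3 e c" and ?\<rho> = "\<lambda>k. affine3 1 (2 * t k * c mod 3)"
  have P: "?P permutes {0..<3}" by (rule affine3_permutes[OF e c])
  have \<rho>: "?\<rho> k permutes {0..<3}" for k by (rule affine3_permutes) simp_all
  have "coord_orbit (slope_array s) (slope_cols t) =
      coord_orbit (\<lambda>i p. slope_array s (3 * ?P (i div 3)
        + i mod 3) p) (\<lambda>b j. slope_array t j (?P b))"
    by (rule coord_orbit_band_perm[OF P])
  also have "\<dots> = coord_orbit (\<lambda>i p. slope_array s (3 * ?P (i div 3) + i mod 3) p)
      (\<lambda>b j. slope_array t (3 * (j div 3) + ?\<rho> (j div 3) (j mod 3)) (?P b))"
    by (rule coord_orbit_cols_perm[OF \<rho>])
  also have "\<dots> = coord_orbit (slope_array (\<lambda>x. s (?P x))) (slope_cols (\<lambda>x. e * t x mod 3))"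
  proof (rule coord_orbit_cong)
    fix i p :: nat assume "i < 9" "p < 3"
    then show "slope_array s (3 * ?P (i div 3) + i mod 3) p = slope_array (\<lambda>x. s (?P x)) i p"
      using permutes_3_less[OF P, of "i div 3"] by (simp add: slope_array_def three_mult_add_simps)
  next
    fix b j :: nat assume "b < 3" "j < 9"
    then show "slope_array t (3 * (j div 3) + ?\<rho> (j div 3) (j mod 3)) (?P b) =
        slope_array (\<lambda>x. e * t x mod 3) j b"
      using permutes_3_less[OF \<rho>, of "j mod 3" "j div 3"]
      by (simp add: slope_array_def three_mult_add_simps affine3_def affine_shift_mod_3)
  qed
  finally show ?thesis .
qed

lemma slope_array_mod_cong:
  assumes "\<And>x. x < 3 \<Longrightarrow> s x mod 3 = s' x mod 3" "i < 9"
  shows "slope_array s i p = slope_array s' i p"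
proof -
  have "(i mod 3 + s (i div 3) * p) mod 3 = (i mod 3 + (s (i div 3) mod 3) * p) mod 3"
    by (simp only: mod_add_mult_mod_eq)
  also have "\<dots> = (i mod 3 + (s' (i div 3) mod 3) * p) mod 3"
    using assms by simp
  also have "\<dots> = (i mod 3 + s' (i div 3) * p) mod 3"
    by (simp only: mod_add_mult_mod_eq)
  finally show ?thesis unfolding slope_array_def .
qed

lemma coord_orbit_slopes_mod_cong:
  assumes "\<And>x. x < 3 \<Longrightarrow> s x mod 3 = s' x mod 3" "\<And>x. x < 3 \<Longrightarrow> t x mod 3 = t' x mod 3"
  shows "coord_orbit (slope_array s) (slope_cols t) = coord_orbit (slope_array s') (slope_cols t')"
  by (rule coord_orbit_cong; rule slope_array_mod_cong) (simp_all add: assms)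

lemma unit3_square_mod_3:
  assumes "unit3 e"
  shows "e * (e * x mod 3) mod 3 = x mod (3::nat)"
proof -
  have "e * (e * x mod 3) mod 3 = e * e * x mod 3" by (simp add: mod_mult_right_eq mult.assoc)
  also have "e * e * x = x + 3 * ((e * e - 1) div 3 * x)" using assms by auto
  finally show ?thesis by simp
qed

lemma reflection_fixing_slopes:
  assumes "\<forall>x<3. unit3 (s x)"
  obtains c where "c < 3" "\<And>x. x < 3 \<Longrightarrow> s (affine3 2 c x) = s x"
proof -
  consider "s 1 = s 2" | "s 0 = s 1" | "s 0 = s 2" using assms unfolding all_less_3 by auto
  then show ?thesis
  proof cases
    case 1 show ?thesis by (rule that[of 0]) (use 1 in \<open>auto simp: affine3_def dest!: less_3_cases\<close>)
  next
    case 2 show ?thesis by (rule that[of 1]) (use 2 in \<open>auto simp: affine3_def dest!: less_3_cases\<close>)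
  next
    case 3 show ?thesis
      by (rule that[of 2]) (use 3 in \<open>auto simp: affine3_def numeral_2_eq_2 dest!: less_3_cases\<close>)
  qed
qed

lemma coord_orbit_scale_cols:
  assumes s: "\<forall>x<3. unit3 (s x)" and f: "unit3 f"
  shows "coord_orbit (slope_array s) (slope_cols t)
    = coord_orbit (slope_array s) (slope_cols (\<lambda>x. f * t x mod 3))"
  using f
proof
  assume "f = 1"
  then show ?thesis by (intro coord_orbit_slopes_mod_cong) simp_all
next
  assume "f = 2"
  obtain c where c: "c < 3" "\<And>x. x < 3 \<Longrightarrow> s (affine3 2 c x) = s x"
    using reflection_fixing_slopes[OF s] by blast
  have "coord_orbit (slope_array s) (slope_cols t) =
      coord_orbit (slope_array (\<lambda>x. s (affine3 2 c x))) (slope_cols (\<lambda>x. 2 * t x mod 3))"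
    by (rule coord_orbit_band_affine) (simp_all add: c)
  also have "\<dots> = coord_orbit (slope_array s) (slope_cols (\<lambda>x. 2 * t x mod 3))"
    by (rule coord_orbit_slopes_mod_cong) (simp_all add: c)
  finally show ?thesis using \<open>f = 2\<close> by simp
qed

lemma coord_orbit_scale_rows:
  assumes t: "\<forall>x<3. unit3 (t x)" and f: "unit3 f"
  shows "coord_orbit (slope_array s) (slope_cols t)
    = coord_orbit (slope_array (\<lambda>x. f * s x mod 3)) (slope_cols t)"
proof -
  have "coord_orbit (slope_array s) (slope_cols t) = coord_orbit (slope_array t) (slope_cols s)"
    by (rule coord_orbit_slopes_transpose)
  also have "\<dots> = coord_orbit (slope_array t) (slope_cols (\<lambda>x. f * s x mod 3))"
    by (rule coord_orbit_scale_cols[OF t f])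
  also have "\<dots> = coord_orbit (slope_array (\<lambda>x. f * s x mod 3)) (slope_cols t)"
    by (rule coord_orbit_slopes_transpose)
  finally show ?thesis .
qed

lemma coord_orbit_permute_rows:
  assumes s: "\<forall>x<3. unit3 (s x)" and e: "unit3 e" and c: "c < 3"
  shows "coord_orbit (slope_array s) (slope_cols t)
    = coord_orbit (slope_array (\<lambda>x. s (affine3 e c x))) (slope_cols t)"
proof -
  have s': "\<forall>x<3. unit3 (s (affine3 e c x))"
    using s permutes_3_less[OF affine3_permutes[OF e c]] by simp
  have "coord_orbit (slope_array s) (slope_cols t) =
      coord_orbit (slope_array (\<lambda>x. s (affine3 e c x))) (slope_cols (\<lambda>x. e * t x mod 3))"
    by (rule coord_orbit_band_affine[OF e c])
  also have "\<dots>
    = coord_orbit (slope_array (\<lambda>x. s (affine3 e c x))) (slope_cols (\<lambda>x. e * (e * t x mod 3) mod 3))"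
    by (rule coord_orbit_scale_cols[OF s' e])
  also have "\<dots> = coord_orbit (slope_array (\<lambda>x. s (affine3 e c x))) (slope_cols t)"
    by (rule coord_orbit_slopes_mod_cong) (simp_all add: unit3_square_mod_3[OF e])
  finally show ?thesis .
qed

definition slope3 :: "nat \<Rightarrow> nat \<Rightarrow> nat" where
  "slope3 z x = (if x = 2 then z else 1)"

lemma coord_orbit_slope3_rows:
  assumes s: "\<forall>x<3. unit3 (s x)" and t: "\<forall>x<3. unit3 (t x)"
  obtains z where "unit3 z" "coord_orbit (slope_array s) (slope_cols t)
    = coord_orbit (slope_array (slope3 z)) (slope_cols t)"
proof -
  obtain e c where ec: "unit3 e" "c < 3" "s (affine3 e c 0) = s (affine3 e c 1)"
  proof -
    consider "s 0 = s 1" | "s 1 = s 2" | "s 0 = s 2" using s unfolding all_less_3 by auto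
    then show ?thesis
    proof cases
      case 1 then show ?thesis using that[of 1 0] by (simp add: affine3_def)
    next
      case 2 then show ?thesis using that[of 1 1] by (simp add: affine3_def numeral_2_eq_2)
    next
      case 3 then show ?thesis using that[of 2 0] by (simp add: affine3_def)
    qed
  qed
  let ?s = "\<lambda>x. s (affine3 e c x)"
  define f where "f = ?s 0"
  have f: "unit3 f" using s permutes_3_less[OF affine3_permutes[OF ec(1,2)], of 0]
    by (simp add: f_def)
  have s': "\<forall>x<3. unit3 (?s x)" using s permutes_3_less[OF affine3_permutes[OF ec(1,2)]] by simp
  have "coord_orbit (slope_array s) (slope_cols t) = coord_orbit (slope_array ?s) (slope_cols t)"
    by (rule coord_orbit_permute_rows[OF s ec(1,2)])
  also have "\<dots> = coord_orbit (slope_array (\<lambda>x. f * ?s x mod 3)) (slope_cols t)"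
    by (rule coord_orbit_scale_rows[OF t f])
  also have "\<dots> = coord_orbit (slope_array (slope3 (f * ?s 2 mod 3))) (slope_cols t)"
    by (rule coord_orbit_slopes_mod_cong) (use f ec(3) in \<open>auto
      simp: slope3_def f_def dest!: less_3_cases\<close>)
  finally show ?thesis
    using that[of "f * ?s 2 mod 3"] f s'[rule_format, of 2] by auto
qed

lemma coord_orbit_slope3:
  assumes s: "\<forall>x<3. unit3 (s x)" and t: "\<forall>x<3. unit3 (t x)"
  obtains z w where "unit3 z" "unit3 w"
    "coord_orbit (slope_array s) (slope_cols t)
      = coord_orbit (slope_array (slope3 z)) (slope_cols (slope3 w))"
proof -
  have unit_slope3: "\<forall>x<3. unit3 (slope3 z x)" if "unit3 z" for z using that
    by (simp add: slope3_def)
  obtain z where z: "unit3 z"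
    "coord_orbit (slope_array s) (slope_cols t)
      = coord_orbit (slope_array (slope3 z)) (slope_cols t)"
    using coord_orbit_slope3_rows[OF s t] by blast
  obtain w where w: "unit3 w"
    "coord_orbit (slope_array t) (slope_cols (slope3 z))
      = coord_orbit (slope_array (slope3 w)) (slope_cols (slope3 z))"
    using coord_orbit_slope3_rows[OF t unit_slope3[OF z(1)]] by blast
  have "coord_orbit (slope_array s) (slope_cols t)
    = coord_orbit (slope_array t) (slope_cols (slope3 z))"
    using z(2) coord_orbit_slopes_transpose[of "slope3 z" t] by (rule trans)
  also have "\<dots> = coord_orbit (slope_array (slope3 z)) (slope_cols (slope3 w))"
    using w(2) coord_orbit_slopes_transpose[of "slope3 w" "slope3 z"] by (rule trans)
  finally show ?thesis using that[OF z(1) w(1)] by blast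
qed

section \<open>An invariant separating the orbits\<close>

text \<open>The bands of a board are aligned if for any two bands \<open>b, b'\<close> every row of \<open>b\<close> has a partner
  row in \<open>b'\<close> carrying, pillar by pillar, the same three symbols; dually for pillars.\<close>

definition aligned :: "(nat \<Rightarrow> nat \<Rightarrow> nat \<Rightarrow> 'a) \<Rightarrow> bool" where
  "aligned X \<longleftrightarrow> (\<forall>b<3. \<forall>b'<3. \<forall>r<3. \<exists>r'<3. \<forall>p<3. X b r p = X b' r' p)"

definition minirow_set :: "(nat \<times> nat \<Rightarrow> nat) \<Rightarrow> nat \<Rightarrow> nat \<Rightarrow> nat \<Rightarrow> nat set" where
  "minirow_set B b r p = (\<lambda>c. entry B b p r c) ` {0..<3}"

definition minicol_set :: "(nat \<times> nat \<Rightarrow> nat) \<Rightarrow> nat \<Rightarrow> nat \<Rightarrow> nat \<Rightarrow> nat set" where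
  "minicol_set B p c b = (\<lambda>r. entry B b p r c) ` {0..<3}"

definition alignment_count :: "(nat \<times> nat \<Rightarrow> nat) \<Rightarrow> nat" where
  "alignment_count B = (if aligned (minirow_set B) then 1 else 0)
    + (if aligned (minicol_set B) then 1 else 0)"

lemma aligned_cong:
  "(\<And>x r p. x < 3 \<Longrightarrow> r < 3 \<Longrightarrow> p < 3 \<Longrightarrow> Y x r p = X x r p) \<Longrightarrow> aligned Y = aligned X"
  unfolding aligned_def by (simp cong: conj_cong)

lemma aligned_reindex_outer:
  assumes A: "aligned X" and f: "\<And>x. x < 3 \<Longrightarrow> f x < 3"
  shows "aligned (\<lambda>x r p. X (f x) r p)"
  unfolding aligned_def
proof (intro allI impI)
  fix x x' r :: nat assume h: "x < 3" "x' < 3" "r < 3"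
  from A f[OF h(1)] f[OF h(2)] h(3) show "\<exists>r'<3. \<forall>p<3. X (f x) r p = X (f x') r' p"
    unfolding aligned_def by blast
qed

lemma aligned_reindex_inner:
  assumes A: "aligned X" and f: "\<And>p. p < 3 \<Longrightarrow> f p < 3"
  shows "aligned (\<lambda>x r p. X x r (f p))"
  unfolding aligned_def
proof (intro allI impI)
  fix x x' r :: nat assume h: "x < 3" "x' < 3" "r < 3"
  obtain r' where "r' < 3" "\<forall>p<3. X x r p = X x' r' p"
    using A h unfolding aligned_def by blast
  then show "\<exists>r'<3. \<forall>p<3. X x r (f p) = X x' r' (f p)" using f by blast
qed

lemma aligned_permute_middle:
  assumes A: "aligned X" and \<rho>: "\<And>x. x < 3 \<Longrightarrow> \<rho> x permutes {0..<3}"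
  shows "aligned (\<lambda>x r p. X x (\<rho> x r) p)"
  unfolding aligned_def
proof (intro allI impI)
  fix x x' r :: nat assume h: "x < 3" "x' < 3" "r < 3"
  obtain r'' where r'': "r'' < 3" "\<forall>p<3. X x (\<rho> x r) p = X x' r'' p"
    using A h permutes_3_less[OF \<rho>[OF h(1)] h(3)] unfolding aligned_def by blast
  have "r'' \<in> \<rho> x' ` {0..<3}" using permutes_image[OF \<rho>[OF h(2)]] r''(1) by simp
  then obtain r' where "r' < 3" "\<rho> x' r' = r''" by auto
  then show "\<exists>r'<3. \<forall>p<3. X x (\<rho> x r) p = X x' (\<rho> x' r') p" using r''(2) by blast
qed

lemma aligned_image:
  assumes "\<And>x r p. x < 3 \<Longrightarrow> r < 3 \<Longrightarrow> p < 3 \<Longrightarrow> X x r p \<subseteq> S" and "inj_on \<pi> S"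
  shows "aligned (\<lambda>x r p. \<pi> ` X x r p) = aligned X"
proof -
  have "(\<pi> ` X x r p = \<pi> ` X x' r' p) = (X x r p = X x' r' p)"
    if "x < 3" "r < 3" "x' < 3" "r' < 3" "p < 3" for x r x' r' p
    using inj_on_image_eq_iff[OF assms(2) assms(1)[OF that(1,2,5)] assms(1)[OF that(3,4,5)]] .
  then show ?thesis unfolding aligned_def by (simp cong: conj_cong)
qed

lemma alignment_count_cong:
  assumes "\<And>c. c \<in> cells \<Longrightarrow> B c = B' c"
  shows "alignment_count B = alignment_count B'"
proof -
  have entries: "entry B b p r c = entry B' b p r c" if "b < 3" "p < 3" "r < 3" "c < 3" for b p r c
    using that assms by (simp add: entry_def)
  have "aligned (minirow_set B) = aligned (minirow_set B')"
    by (rule aligned_cong) (auto simp: minirow_set_def entries intro!: image_cong)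
  moreover have "aligned (minicol_set B) = aligned (minicol_set B')"
    by (rule aligned_cong) (auto simp: minicol_set_def entries intro!: image_cong)
  ultimately show ?thesis unfolding alignment_count_def by simp
qed

lemma entry_move_band_perm:
  "\<lbrakk>P permutes {0..<3}; b < 3; p < 3; r < 3; c < 3\<rbrakk> \<Longrightarrow>
    entry (move (band_perm P) B) b p r c = entry B (P b) p r c"
  by (simp add: entry_def move_def band_perm_def three_mult_add_simps permutes_3_less)

lemma entry_move_row_perm:
  "\<lbrakk>q permutes {0..<3}; b < 3; p < 3; r < 3; c < 3\<rbrakk> \<Longrightarrow>
    entry (move (row_perm b0 q) B) b p r c = entry B b p (if b = b0 then q r else r) c"
  by (simp add: entry_def move_def row_perm_def three_mult_add_simps permutes_3_less)

lemma entry_move_pillar_perm: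
  "\<lbrakk>P permutes {0..<3}; b < 3; p < 3; r < 3; c < 3\<rbrakk> \<Longrightarrow>
    entry (move (pillar_perm P) B) b p r c = entry B b (P p) r c"
  by (simp add: entry_def move_def pillar_perm_def three_mult_add_simps permutes_3_less)

lemma entry_move_col_perm:
  "\<lbrakk>q permutes {0..<3}; b < 3; p < 3; r < 3; c < 3\<rbrakk> \<Longrightarrow>
    entry (move (col_perm p0 q) B) b p r c = entry B b p r (if p = p0 then q c else c)"
  by (simp add: entry_def move_def col_perm_def three_mult_add_simps permutes_3_less)

lemma entry_move_transpose:
  "\<lbrakk>b < 3; p < 3; r < 3; c < 3\<rbrakk> \<Longrightarrow> entry (move transpose_cells B) b p r c = entry B p b c r"
  by (simp add: entry_def move_def transpose_cells_def)

lemma image_permutes_3: "q permutes {0..<3} \<Longrightarrow> (\<lambda>x. f (q x)) ` {0..<3::nat} = f ` {0..<3}"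
  using permutes_image[of q "{0..<3::nat}"] by (metis image_image)

lemma alignment_count_band_perm:
  assumes P: "P permutes {0..<3}"
  shows "alignment_count B \<le> alignment_count (move (band_perm P) B)"
proof -
  let ?B = "move (band_perm P) B"
  have "aligned (minirow_set ?B) = aligned (\<lambda>x r p. minirow_set B (P x) r p)"
    by (rule aligned_cong) (auto simp: minirow_set_def entry_move_band_perm[OF P]
      intro!: image_cong)
  moreover have "aligned (minicol_set ?B) = aligned (\<lambda>x r p. minicol_set B x r (P p))"
    by (rule aligned_cong) (auto simp: minicol_set_def entry_move_band_perm[OF P]
      intro!: image_cong)
  ultimately show ?thesis
    using aligned_reindex_outer[of "minirow_set B" P] aligned_reindex_inner[of "minicol_set B" P]
      permutes_3_less[OF P] unfolding alignment_count_def by auto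
qed

lemma alignment_count_row_perm:
  assumes q: "q permutes {0..<3}"
  shows "alignment_count B \<le> alignment_count (move (row_perm b0 q) B)"
proof -
  let ?B = "move (row_perm b0 q) B" and ?\<rho> = "\<lambda>x. if x = b0 then q else id"
  have \<rho>: "?\<rho> x permutes {0..<3}" for x using q by simp
  have "aligned (minirow_set ?B) = aligned (\<lambda>x r p. minirow_set B x (?\<rho> x r) p)"
    by (rule aligned_cong) (auto
      simp: minirow_set_def entry_move_row_perm[OF q] permutes_3_less[OF q]
        intro!: image_cong)
  moreover have "aligned (minicol_set ?B) = aligned (minicol_set B)"
  proof (rule aligned_cong)
    fix p c x :: nat assume "p < 3" "c < 3" "x < 3"
    then have "minicol_set ?B p c x = (\<lambda>r. entry B x p (?\<rho> x r) c) ` {0..<3}"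
      unfolding minicol_set_def by (auto simp: entry_move_row_perm[OF q] intro!: image_cong)
    also have "\<dots> = minicol_set B p c x"
      unfolding minicol_set_def by (rule image_permutes_3[OF \<rho>])
    finally show "minicol_set ?B p c x = minicol_set B p c x" .
  qed
  ultimately show ?thesis
    using aligned_permute_middle[of "minirow_set B" ?\<rho>] \<rho> unfolding alignment_count_def by auto
qed

lemma alignment_count_pillar_perm:
  assumes P: "P permutes {0..<3}"
  shows "alignment_count B \<le> alignment_count (move (pillar_perm P) B)"
proof -
  let ?B = "move (pillar_perm P) B"
  have "aligned (minirow_set ?B) = aligned (\<lambda>x r p. minirow_set B x r (P p))"
    by (rule aligned_cong) (auto simp: minirow_set_def entry_move_pillar_perm[OF P]
      intro!: image_cong)
  moreover have "aligned (minicol_set ?B) = aligned (\<lambda>x r p. minicol_set B (P x) r p)"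
    by (rule aligned_cong) (auto simp: minicol_set_def entry_move_pillar_perm[OF P]
      intro!: image_cong)
  ultimately show ?thesis
    using aligned_reindex_inner[of "minirow_set B" P] aligned_reindex_outer[of "minicol_set B" P]
      permutes_3_less[OF P] unfolding alignment_count_def by auto
qed

lemma alignment_count_col_perm:
  assumes q: "q permutes {0..<3}"
  shows "alignment_count B \<le> alignment_count (move (col_perm p0 q) B)"
proof -
  let ?B = "move (col_perm p0 q) B" and ?\<rho> = "\<lambda>x. if x = p0 then q else id"
  have \<rho>: "?\<rho> x permutes {0..<3}" for x using q by simp
  have "aligned (minicol_set ?B) = aligned (\<lambda>x r p. minicol_set B x (?\<rho> x r) p)"
    by (rule aligned_cong) (auto
      simp: minicol_set_def entry_move_col_perm[OF q] permutes_3_less[OF q]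
        intro!: image_cong)
  moreover have "aligned (minirow_set ?B) = aligned (minirow_set B)"
  proof (rule aligned_cong)
    fix x r p :: nat assume "x < 3" "r < 3" "p < 3"
    then have "minirow_set ?B x r p = (\<lambda>c. entry B x p r (?\<rho> p c)) ` {0..<3}"
      unfolding minirow_set_def by (auto simp: entry_move_col_perm[OF q] intro!: image_cong)
    also have "\<dots> = minirow_set B x r p"
      unfolding minirow_set_def by (rule image_permutes_3[OF \<rho>])
    finally show "minirow_set ?B x r p = minirow_set B x r p" .
  qed
  ultimately show ?thesis
    using aligned_permute_middle[of "minicol_set B" ?\<rho>] \<rho> unfolding alignment_count_def by auto
qed

lemma alignment_count_transpose: "alignment_count (move transpose_cells B) = alignment_count B"
proof -
  let ?B = "move transpose_cells B"
  have "aligned (minirow_set ?B) = aligned (minicol_set B)"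
    by (rule aligned_cong) (auto simp: minirow_set_def minicol_set_def entry_move_transpose
      intro!: image_cong)
  moreover have "aligned (minicol_set ?B) = aligned (minirow_set B)"
    by (rule aligned_cong) (auto simp: minirow_set_def minicol_set_def entry_move_transpose
      intro!: image_cong)
  ultimately show ?thesis unfolding alignment_count_def by simp
qed

lemma alignment_count_H9_gens_le:
  assumes "g \<in> H9_gens"
  shows "alignment_count B \<le> alignment_count (move g B)"
  using assms unfolding H9_gens_def
  by (auto intro: alignment_count_band_perm alignment_count_row_perm alignment_count_pillar_perm
      alignment_count_col_perm simp: alignment_count_transpose)

lemma alignment_count_H9_gens:
  assumes g: "g \<in> H9_gens"
  shows "alignment_count (move g B) = alignment_count B"
proof -
  obtain g' where g': "g' \<in> H9_gens" "\<forall>c\<in>cells. g (g' c) = c"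
    using H9_gens_inverse[OF g] by blast
  have "alignment_count (move g' (move g B)) = alignment_count B"
    by (rule alignment_count_cong) (use g' H9_gens_cells[OF g'(1)] in \<open>simp add: move_def\<close>)
  then show ?thesis
    using alignment_count_H9_gens_le[OF g, of B] alignment_count_H9_gens_le[OF g'(1), of "move g B"]
      by simp
qed

lemma alignment_count_H9: "\<sigma> \<in> H9 \<Longrightarrow> alignment_count (move \<sigma> B) = alignment_count B"
proof (induction arbitrary: B rule: H9.induct)
  case H9_id
  show ?case by (rule alignment_count_cong) (simp add: move_def)
next
  case (H9_step g h)
  have "move (g \<circ> h) B = move h (move g B)"
    using move_move[of h g B] H9_cells[OF H9_step.hyps(2)] by simp
  then show ?case using H9_step.IH[of "move g B"] alignment_count_H9_gens[OF H9_step.hyps(1)]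
    by (simp add: comp_def)
qed

lemma alignment_count_relabel:
  assumes \<pi>: "inj_on \<pi> {0..<9}" and B: "symbol_board B"
  shows "alignment_count (relabel \<pi> B) = alignment_count B"
proof -
  have less: "entry B b p r c < 9" for b p r c using symbol_boardD(1)[OF B] by (simp add: entry_def)
  have "aligned (minirow_set (relabel \<pi> B)) = aligned (\<lambda>x r p. \<pi> ` minirow_set B x r p)"
    by (rule aligned_cong) (auto simp: minirow_set_def entry_relabel image_image intro!: image_cong)
  also have "\<dots> = aligned (minirow_set B)"
    by (rule aligned_image[OF _ \<pi>]) (auto simp: minirow_set_def less)
  moreover have "aligned (minicol_set (relabel \<pi> B)) = aligned (\<lambda>x r p. \<pi> ` minicol_set B x r p)"
    by (rule aligned_cong) (auto simp: minicol_set_def entry_relabel image_image intro!: image_cong)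
  moreover have "\<dots> = aligned (minicol_set B)"
    by (rule aligned_image[OF _ \<pi>]) (auto simp: minicol_set_def less)
  ultimately show ?thesis unfolding alignment_count_def by simp
qed

lemma alignment_count_G_sm_orbit:
  assumes B: "symbol_board B" and X: "X \<in> G_sm_orbit B"
  shows "alignment_count X = alignment_count B"
proof -
  obtain \<sigma> \<pi> where X: "X = relabel \<pi> (move \<sigma> B)" "\<sigma> \<in> H9" "\<pi> \<in> S_sm"
    using X unfolding G_sm_orbit_def by blast
  have "inj_on \<pi> {0..<9}" using X(3) unfolding S_sm_def by (auto dest: permutes_inj_on)
  then have "alignment_count X = alignment_count (move \<sigma> B)"
    unfolding X(1) by (rule alignment_count_relabel[OF _ move_symbol_board[OF B]])
  then show ?thesis using alignment_count_H9[OF X(2)] by simp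
qed

lemma symbol_image_inject:
  assumes "a < 3" "a' < 3"
  shows "symbol a ` {0..<3} = symbol a' ` {0..<3} \<longleftrightarrow> a = a'"
    and "(\<lambda>x. symbol x a) ` {0..<3} = (\<lambda>x. symbol x a') ` {0..<3} \<longleftrightarrow> a = a'"
proof -
  show "symbol a ` {0..<3} = symbol a' ` {0..<3} \<longleftrightarrow> a = a'"
  proof
    assume "symbol a ` {0..<3} = symbol a' ` {0..<3}"
    then have "symbol a 0 \<in> symbol a' ` {0..<3}"
      by (metis atLeastLessThan_iff imageI zero_le zero_less_numeral)
    then obtain x where "x < 3" "symbol a 0 = symbol a' x" by auto
    then show "a = a'" using assms symbol_inject by auto
  qed simp
  show "(\<lambda>x. symbol x a) ` {0..<3} = (\<lambda>x. symbol x a') ` {0..<3} \<longleftrightarrow> a = a'"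
  proof
    assume "(\<lambda>x. symbol x a) ` {0..<3} = (\<lambda>x. symbol x a') ` {0..<3}"
    then have "symbol 0 a \<in> (\<lambda>x. symbol x a') ` {0..<3}"
      by (metis atLeastLessThan_iff imageI zero_le zero_less_numeral)
    then obtain x where "x < 3" "symbol 0 a = symbol x a'" by auto
    then show "a = a'" using assms symbol_inject by auto
  qed simp
qed

lemma image_less_3_permutes:
  fixes f :: "nat \<Rightarrow> nat"
  assumes "\<And>x. x < 3 \<Longrightarrow> f x < 3" "\<And>x y. x < 3 \<Longrightarrow> y < 3 \<Longrightarrow> f x = f y \<Longrightarrow> x = y"
  shows "f ` {0..<3} = {0..<(3::nat)}"
  using assms by (intro endo_inj_surj) (auto intro: inj_onI)

lemma aligned_minirow_coord_board:
  assumes R: "latin_stack R" and C: "latin_stack (\<lambda>j b. C b j)"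
  shows "aligned (minirow_set (coord_board R C)) = aligned (\<lambda>b r p. R (3 * b + r) p)"
proof -
  have "minirow_set (coord_board R C) b r p = symbol (R (3 * b + r) p) ` {0..<3}"
    if "b < 3" "r < 3" "p < 3" for b r p
  proof -
    have "minirow_set (coord_board R C) b r p = symbol (R (3 * b + r) p) ` ((\<lambda>c. C b (3 * p
      + c)) ` {0..<3})"
      unfolding minirow_set_def image_image using that
        by (auto simp: entry_coord_board[OF R C] intro!: image_cong)
    also have "(\<lambda>c. C b (3 * p + c)) ` {0..<3} = {0..<3}"
      by (rule image_less_3_permutes)
        (use that latin_stack_less[OF C] latin_stack_col[OF C] in auto)
    finally show ?thesis .
  qed
  then have "aligned (minirow_set (coord_board R C)) = aligned (\<lambda>b r p. symbol (R (3 * b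
    + r) p) ` {0..<3})"
    by (rule aligned_cong)
  also have "\<dots> = aligned (\<lambda>b r p. R (3 * b + r) p)"
    unfolding aligned_def using latin_stack_less[OF R]
    by (simp add: symbol_image_inject(1) cong: conj_cong)
  finally show ?thesis .
qed

lemma aligned_minicol_coord_board:
  assumes R: "latin_stack R" and C: "latin_stack (\<lambda>j b. C b j)"
  shows "aligned (minicol_set (coord_board R C)) = aligned (\<lambda>p c b. C b (3 * p + c))"
proof -
  have "minicol_set (coord_board R C) p c b = (\<lambda>x. symbol x (C b (3 * p + c))) ` {0..<3}"
    if "p < 3" "c < 3" "b < 3" for p c b
  proof -
    have "minicol_set (coord_board R C) p c b
        = (\<lambda>x. symbol x (C b (3 * p + c))) ` ((\<lambda>r. R (3 * b + r) p) ` {0..<3})"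
      unfolding minicol_set_def image_image using that
        by (auto simp: entry_coord_board[OF R C] intro!: image_cong)
    also have "(\<lambda>r. R (3 * b + r) p) ` {0..<3} = {0..<3}"
      by (rule image_less_3_permutes)
        (use that latin_stack_less[OF R] latin_stack_col[OF R] in auto)
    finally show ?thesis .
  qed
  then have "aligned (minicol_set (coord_board R C)) = aligned (\<lambda>p c b. (\<lambda>x. symbol x (C b (3 * p
    + c))) ` {0..<3})"
    by (rule aligned_cong)
  also have "\<dots> = aligned (\<lambda>p c b. C b (3 * p + c))"
    unfolding aligned_def using latin_stack_less[OF C]
    by (simp add: symbol_image_inject(2) cong: conj_cong)
  finally show ?thesis .
qed

lemma aligned_slope3_iff:
  "unit3 z \<Longrightarrow> aligned (\<lambda>b r p. slope_array (slope3 z) (3 * b + r) p) \<longleftrightarrow> z = 1"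
  by (elim disjE) (simp_all add: aligned_def all_less_3 ex_less_3 slope_array_def slope3_def)

lemma unit3_slope3: "unit3 z \<Longrightarrow> \<forall>x<3. unit3 (slope3 z x)"
  by (simp add: slope3_def)

definition canonical_board :: "nat \<Rightarrow> nat \<Rightarrow> nat \<times> nat \<Rightarrow> nat" where
  "canonical_board z w = coord_board (slope_array (slope3 z)) (slope_cols (slope3 w))"

lemma canonical_board_semimagic: "unit3 z \<Longrightarrow> unit3 w \<Longrightarrow> semimagic (canonical_board z w)"
  unfolding canonical_board_def
  by (intro coord_board_semimagic slope_array_latin_stack unit3_slope3)

lemma alignment_count_canonical_board:
  assumes z: "unit3 z" and w: "unit3 w"
  shows "alignment_count (canonical_board z w) = (if z = 1 then 1 else 0) + (if w
    = 1 then 1 else 0)"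
proof -
  note R = slope_array_latin_stack[OF unit3_slope3[OF z]] and C
    = slope_array_latin_stack[OF unit3_slope3[OF w]]
  show ?thesis
    unfolding canonical_board_def alignment_count_def aligned_minirow_coord_board[OF R C]
      aligned_minicol_coord_board[OF R C]
    using aligned_slope3_iff[OF z] aligned_slope3_iff[OF w] by simp
qed

lemma G_sm_orbit_canonical_board:
  assumes sm: "semimagic B"
  obtains z w where "unit3 z" "unit3 w" "G_sm_orbit B = G_sm_orbit (canonical_board z w)"
proof -
  obtain \<pi> R C where \<pi>: "\<pi> = id \<or> \<pi> = coord_swap" and B: "relabel \<pi> B = coord_board R C"
    and R: "latin_stack R" and C: "latin_stack (\<lambda>j b. C b j)"
    using semimagic_relabel_coord_board[OF sm] by blast
  have "\<pi> \<in> S_sm" "\<And>v. v < 9 \<Longrightarrow> \<pi> (\<pi> v) = v"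
    using \<pi> id_in_S_sm coord_swap_in_S_sm coord_swap_involution by auto
  then have "G_sm_orbit (relabel \<pi> B) = G_sm_orbit B"
    by (rule G_sm_orbit_relabel[OF sudoku_symbol_board[OF semimagic_sudoku[OF sm]]])
  with B have orbit: "G_sm_orbit B = coord_orbit R C" by (simp add: coord_orbit_def)
  obtain s where s: "\<forall>x<3. unit3 (s x)" "coord_orbit R C = coord_orbit (slope_array s) C"
    using coord_orbit_slope_rows[OF R] by blast
  obtain t where t: "\<forall>x<3. unit3 (t x)"
    "coord_orbit (slope_array s) C = coord_orbit (slope_array s) (slope_cols t)"
    using coord_orbit_slope_cols[OF C] by blast
  obtain z w where "unit3 z" "unit3 w"
    "coord_orbit (slope_array s) (slope_cols t)
      = coord_orbit (slope_array (slope3 z)) (slope_cols (slope3 w))"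
    using coord_orbit_slope3[OF s(1) t(1)] by blast
  with orbit s(2) t(2) show ?thesis using that by (simp add: coord_orbit_def canonical_board_def)
qed

lemma G_sm_orbit_eq_alignment_count:
  assumes "symbol_board B" "symbol_board B'" "G_sm_orbit B = G_sm_orbit B'"
  shows "alignment_count B = alignment_count B'"
  using alignment_count_G_sm_orbit[OF assms(2)] in_G_sm_orbit_self[OF assms(1)] assms(3) by simp

theorem theorem3p7:
  shows "card (G_sm_orbit ` {B. semimagic B}) = 3"
proof -
  let ?O = "\<lambda>z w. G_sm_orbit (canonical_board z w)"
  have "G_sm_orbit ` {B. semimagic B} = {?O 1 1, ?O 1 2, ?O 2 2}"
  proof
    have "?O 2 1 = ?O 1 2"
      using coord_orbit_slopes_transpose[of "slope3 2" "slope3 1"]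
      by (simp add: coord_orbit_def canonical_board_def)
    show "G_sm_orbit ` {B. semimagic B} \<subseteq> {?O 1 1, ?O 1 2, ?O 2 2}"
    proof (rule image_subsetI)
      fix B assume "B \<in> {B. semimagic B}"
      then have "semimagic B" by simp
      then obtain z w where "unit3 z" "unit3 w" "G_sm_orbit B = G_sm_orbit (canonical_board z w)"
        by (rule G_sm_orbit_canonical_board)
      with \<open>?O 2 1 = ?O 1 2\<close> show "G_sm_orbit B \<in> {?O 1 1, ?O 1 2, ?O 2 2}" by fastforce
    qed
    show "{?O 1 1, ?O 1 2, ?O 2 2} \<subseteq> G_sm_orbit ` {B. semimagic B}"
      using canonical_board_semimagic by auto
  qed
  moreover have "?O z w \<noteq> ?O z' w'"
    if "alignment_count (canonical_board z w) \<noteq> alignment_count (canonical_board z' w')" for z w z' w'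
    using that G_sm_orbit_eq_alignment_count[OF coord_board_symbol_board coord_board_symbol_board]
    unfolding canonical_board_def by blast
  then have "?O 1 1 \<noteq> ?O 1 2" "?O 1 1 \<noteq> ?O 2 2" "?O 1 2 \<noteq> ?O 2 2"
    by (simp_all add: alignment_count_canonical_board)
  ultimately show ?thesis by simp
qed

end
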